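(* Let $F$ be a Finsler structure on a smooth manifold $M$ of dimension $n\ge2$, and let $\alpha=d_JS-d\tau=\frac{\partial S}{\partial y^k}dx^k-d\tau$ (equivalently $\alpha=\nabla I_k\,dx^k-I_k\,\delta y^k$ with $I_k=\frac{\partial\tau}{\partial y^k}$). The $\chi$-curvature of $F$ vanishes if and only if any one of the following (mutually equivalent) conditions holds: (i) $\mathcal{L}_G\alpha=0$; (ii) $d_hd_JS=\frac{\delta}{\delta x^j}\left(\frac{\partial S}{\partial y^i}\right)dx^j\wedge dx^i=0$; (iii) $d\alpha=2E_{ij}\,\delta y^i\wedge dx^j$.
   Context: $M$ is a smooth $n$-manifold, $T_0M=TM\setminus\{0\}$, with induced coordinates $(x^i,y^i)$. A Finsler structure is a function $F:TM\to[0,\infty)$, continuous, positively $1$-homogeneous in $y$, smooth on $T_0M$, such that $g_{ij}=\frac12\frac{\partial^2F^2}{\partial y^i\partial y^j}$ is non-degenerate on $T_0M$; $g^{ij}$ is its inverse. The geodesic spray is $G=y^i\frac{\partial}{\partial x^i}-2G^i\frac{\partial}{\partial y^i}$ with $G^i=\frac14 g^{ij}\left(\frac{\partial^2F^2}{\partial y^j\partial x^k}y^k-\frac{\partial F^2}{\partial x^j}\right)$; $\mathcal{L}_G$ is the Lie derivative along $G$. Set $N^j_i=\frac{\partial G^j}{\partial y^i}$, $\frac{\delta}{\delta x^i}=\frac{\partial}{\partial x^i}-N^j_i\frac{\partial}{\partial y^j}$, $\delta y^i=dy^i+N^i_jdx^j$. The mean Berwald curvature is $E_{ij}=\frac12\frac{\partial^3G^k}{\partial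 y^i\partial y^j\partial y^k}$. For a semi-basic covector $I_k$, $\nabla I_k=G(I_k)-I_jN^j_k$ (dynamical covariant derivative). Fix a volume form $\sigma(x)\,dx\wedge dy$ on $TM$ with $\sigma$ depending only on $x$; the distortion is $\tau=\frac12\ln\frac{\det(g_{ij})}{\sigma}$, and $S=G(\tau)$. $d_JS=\frac{\partial S}{\partial y^i}dx^i$; $d_h=i_hd-di_h$ is the derivation associated with the horizontal projector $h=\frac{\delta}{\delta x^i}\otimes dx^i$. The $\chi$-curvature is $\chi=\frac12\left\{G\left(\frac{\partial S}{\partial y^i}\right)-\frac{\partial S}{\partial x^i}\right\}dx^i$. *)

theory Defs
  imports "HOL-Analysis.Analysis"
begin

text \<open>Local-coordinate model: the manifold M is (a chart domain) an open set
U of R^n, TM = U x R^n with induced coordinates (x^i, y^i). Coordinates on TM are indexed by 'n + 'n: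
Inl i is x^i, Inr i is y^i.\<close>

type_synonym 'n pt = "(real^'n) \<times> (real^'n)"

definition dirD :: "('a::real_normed_vector \<Rightarrow> real) \<Rightarrow> 'a \<Rightarrow> 'a \<Rightarrow> real" where
  "dirD f v p = deriv (\<lambda>t. f (p + t *\<^sub>R v)) 0"

definition smooth_on :: "'a::real_normed_vector set \<Rightarrow> ('a \<Rightarrow> real) \<Rightarrow> bool" where
  "smooth_on W f \<longleftrightarrow> (\<forall>vs. \<forall>p\<in>W. (foldr (\<lambda>v g. dirD g v) vs f) differentiable (at p))"

definition cvec :: "'n + 'n \<Rightarrow> ('n::finite) pt" where
  "cvec A = (case A of Inl i \<Rightarrow> (axis i 1, 0) | Inr i \<Rightarrow> (0, axis i 1))"

definition pd :: "'n + 'n \<Rightarrow> (('n::finite) pt \<Rightarrow> real) \<Rightarrow> 'n pt \<Rightarrow> real" where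
  "pd A f = dirD f (cvec A)"

abbreviation Dx :: "'n \<Rightarrow> (('n::finite) pt \<Rightarrow> real) \<Rightarrow> 'n pt \<Rightarrow> real" where
  "Dx i \<equiv> pd (Inl i)"

abbreviation Dy :: "'n \<Rightarrow> (('n::finite) pt \<Rightarrow> real) \<Rightarrow> 'n pt \<Rightarrow> real" where
  "Dy i \<equiv> pd (Inr i)"

definition T0 :: "(real^'n) set \<Rightarrow> ('n::finite) pt set" where
  "T0 U = U \<times> (UNIV - {0})"

definition fund_g :: "('n::finite pt \<Rightarrow> real) \<Rightarrow> 'n \<Rightarrow> 'n \<Rightarrow> 'n pt \<Rightarrow> real" where
  "fund_g F i j p = 1/2 * Dy i (Dy j (\<lambda>q. (F q)^2)) p"

definition gmat :: "('n::finite pt \<Rightarrow> real) \<Rightarrow> 'n pt \<Rightarrow> real^'n^'n" where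
  "gmat F p = (\<chi> i j. fund_g F i j p)"

definition ginv :: "('n::finite pt \<Rightarrow> real) \<Rightarrow> 'n \<Rightarrow> 'n \<Rightarrow> 'n pt \<Rightarrow> real" where
  "ginv F i j p = matrix_inv (gmat F p) $ i $ j"

definition finsler_on :: "(real^'n) set \<Rightarrow> (('n::finite) pt \<Rightarrow> real) \<Rightarrow> bool" where
  "finsler_on U F \<longleftrightarrow> open U
     \<and> (\<forall>p\<in>U \<times> UNIV. F p \<ge> 0)
     \<and> continuous_on (U \<times> UNIV) F
     \<and> (\<forall>x\<in>U. \<forall>y. \<forall>c::real. c > 0 \<longrightarrow> F (x, c *\<^sub>R y) = c * F (x, y))
     \<and> smooth_on (T0 U) F
     \<and> (\<forall>p\<in>T0 U. det (gmat F p) \<noteq> 0)"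

definition spray :: "('n::finite pt \<Rightarrow> real) \<Rightarrow> 'n \<Rightarrow> 'n pt \<Rightarrow> real" where
  "spray F k p = 1/4 * (\<Sum>j\<in>UNIV. ginv F k j p *
      ((\<Sum>l\<in>UNIV. Dy j (Dx l (\<lambda>q. (F q)^2)) p * (snd p $ l)) - Dx j (\<lambda>q. (F q)^2) p))"

definition nlc :: "('n::finite pt \<Rightarrow> real) \<Rightarrow> 'n \<Rightarrow> 'n \<Rightarrow> 'n pt \<Rightarrow> real" where
  "nlc F j i p = Dy i (spray F j) p"

definition Gvec :: "('n::finite pt \<Rightarrow> real) \<Rightarrow> 'n + 'n \<Rightarrow> 'n pt \<Rightarrow> real" where
  "Gvec F A p = (case A of Inl i \<Rightarrow> snd p $ i | Inr i \<Rightarrow> - 2 * spray F i p)"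

definition Gop :: "('n::finite pt \<Rightarrow> real) \<Rightarrow> ('n pt \<Rightarrow> real) \<Rightarrow> 'n pt \<Rightarrow> real" where
  "Gop F f p = (\<Sum>A\<in>UNIV. Gvec F A p * pd A f p)"

definition meanB :: "('n::finite pt \<Rightarrow> real) \<Rightarrow> 'n \<Rightarrow> 'n \<Rightarrow> 'n pt \<Rightarrow> real" where
  "meanB F i j p = 1/2 * (\<Sum>k\<in>UNIV. Dy i (Dy j (Dy k (spray F k))) p)"

text \<open>Distortion and S-curvature, w.r.t. volume form sigma(x) dx dy
(absolute values: the ratio det g / sigma has constant sign).\<close>
definition distortion :: "('n::finite pt \<Rightarrow> real) \<Rightarrow> (real^'n \<Rightarrow> real) \<Rightarrow> 'n pt \<Rightarrow> real" where
  "distortion F \<sigma> p = 1/2 * ln (\<bar>det (gmat F p)\<bar> / \<bar>\<sigma> (fst p)\<bar>)"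

definition Scurv :: "('n::finite pt \<Rightarrow> real) \<Rightarrow> (real^'n \<Rightarrow> real) \<Rightarrow> 'n pt \<Rightarrow> real" where
  "Scurv F \<sigma> = Gop F (distortion F \<sigma>)"

definition chi :: "('n::finite pt \<Rightarrow> real) \<Rightarrow> (real^'n \<Rightarrow> real) \<Rightarrow> 'n \<Rightarrow> 'n pt \<Rightarrow> real" where
  "chi F \<sigma> i p = 1/2 * (Gop F (Dy i (Scurv F \<sigma>)) p - Dx i (Scurv F \<sigma>) p)"

text \<open>Differential forms on TM by components in the basis dx^i, dy^i.
A 2-form w is given by w A B = w(d_A, d_B); wedge (a,b) A B = a_A b_B - a_B b_A.\<close>
type_synonym 'n form1 = "'n + 'n \<Rightarrow> 'n pt \<Rightarrow> real"
type_synonym 'n form2 = "'n + 'n \<Rightarrow> 'n + 'n \<Rightarrow> 'n pt \<Rightarrow> real"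

definition dform0 :: "(('n::finite) pt \<Rightarrow> real) \<Rightarrow> 'n form1" where
  "dform0 f A = pd A f"

definition dform1 :: "('n::finite) form1 \<Rightarrow> 'n form2" where
  "dform1 \<theta> A B p = pd A (\<theta> B) p - pd B (\<theta> A) p"

definition wedge :: "('n::finite) form1 \<Rightarrow> 'n form1 \<Rightarrow> 'n form2" where
  "wedge a b A B p = a A p * b B p - a B p * b A p"

definition dJ :: "(('n::finite) pt \<Rightarrow> real) \<Rightarrow> 'n form1" where
  "dJ f A = (case A of Inl i \<Rightarrow> Dy i f | Inr i \<Rightarrow> (\<lambda>p. 0))"

text \<open>Horizontal projector h = delta/delta x^i (x) dx^i, components h^C_A with
h(d_A) = sum_C h^C_A d_C.\<close>
definition hproj :: "('n::finite pt \<Rightarrow> real) \<Rightarrow> 'n + 'n \<Rightarrow> 'n + 'n \<Rightarrow> 'n pt \<Rightarrow> real" where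
  "hproj F C A p = (case A of
      Inl i \<Rightarrow> (case C of Inl k \<Rightarrow> (if k = i then 1 else 0) | Inr j \<Rightarrow> - nlc F j i p)
    | Inr i \<Rightarrow> 0)"

definition ih1 :: "('n::finite pt \<Rightarrow> real) \<Rightarrow> 'n form1 \<Rightarrow> 'n form1" where
  "ih1 F \<theta> A p = (\<Sum>C\<in>UNIV. hproj F C A p * \<theta> C p)"

definition ih2 :: "('n::finite pt \<Rightarrow> real) \<Rightarrow> 'n form2 \<Rightarrow> 'n form2" where
  "ih2 F \<omega> A B p = (\<Sum>C\<in>UNIV. hproj F C A p * \<omega> C B p + hproj F C B p * \<omega> A C p)"

definition dh :: "('n::finite pt \<Rightarrow> real) \<Rightarrow> 'n form1 \<Rightarrow> 'n form2" where
  "dh F \<theta> A B p = ih2 F (dform1 \<theta>) A B p - dform1 (ih1 F \<theta>) A B p"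

definition lie1 :: "('n::finite + 'n \<Rightarrow> 'n pt \<Rightarrow> real) \<Rightarrow> 'n form1 \<Rightarrow> 'n form1" where
  "lie1 X \<theta> A p = (\<Sum>B\<in>UNIV. X B p * pd B (\<theta> A) p + \<theta> B p * pd A (X B) p)"

definition alpha :: "('n::finite pt \<Rightarrow> real) \<Rightarrow> (real^'n \<Rightarrow> real) \<Rightarrow> 'n form1" where
  "alpha F \<sigma> A p = dJ (Scurv F \<sigma>) A p - dform0 (distortion F \<sigma>) A p"

definition dx_form :: "'n \<Rightarrow> ('n::finite) form1" where
  "dx_form j A p = (case A of Inl k \<Rightarrow> (if k = j then 1 else 0) | Inr k \<Rightarrow> 0)"

definition deltay_form :: "('n::finite pt \<Rightarrow> real) \<Rightarrow> 'n \<Rightarrow> 'n form1" where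
  "deltay_form F i A p = (case A of Inl j \<Rightarrow> nlc F i j p | Inr k \<Rightarrow> (if k = i then 1 else 0))"

end

theory Submission
  imports Defs
begin

text \<open>
  Everything reduces to one identity for the S-curvature.  By Jacobi's formula and the
  definition of the spray, \<open>G(ln |det g|) = 2 \<partial>G\<^sup>m/\<partial>y\<^sup>m\<close>, whence
  \<open>S = \<partial>G\<^sup>m/\<partial>y\<^sup>m - \<onehalf> y\<^sup>l \<partial>(ln |\<sigma>|)/\<partial>x\<^sup>l\<close> and
  \<open>\<partial>\<^sup>2S/\<partial>y\<^sup>i\<partial>y\<^sup>j = 2 E\<^sub>i\<^sub>j\<close>.  Since \<open>S\<close> is positively homogeneous of degree 1, Euler's
  theorem gives \<open>2\<chi>\<^sub>i = y\<^sup>j (\<delta>\<^sub>j S\<^sub>.\<^sub>i - \<delta>\<^sub>i S\<^sub>.\<^sub>j)\<close> with \<open>S\<^sub>.\<^sub>i = \<partial>S/\<partial>y\<^sup>i\<close>, while the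
  vertical curl of \<open>\<chi>\<close> is \<open>\<delta>\<^sub>k S\<^sub>.\<^sub>i - \<delta>\<^sub>i S\<^sub>.\<^sub>k\<close>.  Hence \<open>\<chi> = 0\<close> iff
  \<open>\<delta>\<^sub>i S\<^sub>.\<^sub>j\<close> is symmetric, i.e. iff \<open>d\<^sub>h d\<^sub>J S = 0\<close>.  The same symmetry is what
  \<open>d\<alpha> = 2E\<^sub>i\<^sub>j \<delta>y\<^sup>i \<wedge> dx\<^sup>j\<close> says in its horizontal part (the other parts hold
  identically by \<open>\<partial>\<^sup>2S/\<partial>y\<^sup>i\<partial>y\<^sup>j = 2E\<^sub>i\<^sub>j\<close>), and since \<open>i\<^sub>G \<alpha> = 0\<close> by Euler's theorem,
  Cartan's formula gives \<open>\<L>\<^sub>G \<alpha> = i\<^sub>G d\<alpha> = 2\<chi>\<^sub>i dx\<^sup>i\<close>.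
\<close>

lemma sum_UNIV_Plus:
  "(\<Sum>A\<in>(UNIV::('a::finite + 'b::finite) set). f A) = (\<Sum>i\<in>UNIV. f (Inl i)) + (\<Sum>i\<in>UNIV. f (Inr i))"
proof -
  have "(\<Sum>A\<in>(UNIV::('a + 'b) set). f A) = (\<Sum>A\<in>UNIV <+> UNIV. f A)" by simp
  also have "\<dots> = (\<Sum>i\<in>UNIV. f (Inl i)) + (\<Sum>i\<in>UNIV. f (Inr i))"
    by (subst sum.Plus) (auto simp: o_def)
  finally show ?thesis .
qed

lemma if_delta_mult: "q * (if P then (1::'a::comm_semiring_1) else 0) = (if P then q else 0)"
  by simp

lemma sum_symmetric_antisymmetric:
  fixes a b :: "'i \<Rightarrow> 'i \<Rightarrow> 'a::field_char_0"
  assumes "\<And>i j. a i j = a j i" "\<And>i j. b i j = - b j i"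
  shows "(\<Sum>i\<in>I. \<Sum>j\<in>I. a i j * b i j) = 0"
proof -
  have "(\<Sum>i\<in>I. \<Sum>j\<in>I. a i j * b i j) = (\<Sum>j\<in>I. \<Sum>i\<in>I. a i j * b i j)"
    by (rule sum.swap)
  also have "\<dots> = (\<Sum>j\<in>I. \<Sum>i\<in>I. - (a j i * b j i))"
    by (intro sum.cong refl) (metis assms minus_mult_right)
  also have "\<dots> = - (\<Sum>j\<in>I. \<Sum>i\<in>I. a j i * b j i)"
    by (simp add: sum_negf)
  finally have "2 * (\<Sum>i\<in>I. \<Sum>j\<in>I. a i j * b i j) = 0" by simp
  then show ?thesis by simp
qed

lemma sum_mult_sum_sum_swap:
  fixes f :: "'a \<Rightarrow> 'r::comm_semiring_1"
  shows "(\<Sum>l\<in>A. f l * (\<Sum>i\<in>B. \<Sum>j\<in>C. h l i j)) = (\<Sum>i\<in>B. \<Sum>j\<in>C. \<Sum>l\<in>A. f l * h l i j)"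
proof -
  have "(\<Sum>l\<in>A. f l * (\<Sum>i\<in>B. \<Sum>j\<in>C. h l i j)) = (\<Sum>l\<in>A. \<Sum>i\<in>B. \<Sum>j\<in>C. f l * h l i j)"
    by (simp add: sum_distrib_left)
  also have "\<dots> = (\<Sum>i\<in>B. \<Sum>l\<in>A. \<Sum>j\<in>C. f l * h l i j)"
    by (rule sum.swap)
  also have "\<dots> = (\<Sum>i\<in>B. \<Sum>j\<in>C. \<Sum>l\<in>A. f l * h l i j)"
    by (rule sum.cong[OF refl], rule sum.swap)
  finally show ?thesis .
qed

lemma sum_sum_mult_swap:
  fixes w :: "'a \<Rightarrow> 'r::comm_semiring_1"
  shows "(\<Sum>k\<in>A. (\<Sum>i\<in>B. u i * v i k) * w k) = (\<Sum>i\<in>B. u i * (\<Sum>k\<in>A. v i k * w k))"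
proof -
  have "(\<Sum>k\<in>A. (\<Sum>i\<in>B. u i * v i k) * w k) = (\<Sum>k\<in>A. \<Sum>i\<in>B. u i * (v i k * w k))"
    by (simp add: sum_distrib_right mult.assoc)
  also have "\<dots> = (\<Sum>i\<in>B. \<Sum>k\<in>A. u i * (v i k * w k))"
    by (rule sum.swap)
  finally show ?thesis by (simp add: sum_distrib_left)
qed

lemma has_real_derivative_frechet_derivative_line:
  fixes f :: "'a::real_normed_vector \<Rightarrow> real"
  assumes "f differentiable (at (p + t *\<^sub>R v))"
  shows "((\<lambda>s. f (p + s *\<^sub>R v)) has_real_derivative frechet_derivative f (at (p + t *\<^sub>R v)) v) (at t)"
proof -
  let ?q = "p + t *\<^sub>R v"
  have d: "(f has_derivative frechet_derivative f (at ?q)) (at ?q)"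
    using assms frechet_derivative_works by blast
  have lin: "linear (frechet_derivative f (at ?q))"
    using d has_derivative_bounded_linear bounded_linear.linear by blast
  have l: "((\<lambda>s. p + s *\<^sub>R v) has_derivative (\<lambda>s. s *\<^sub>R v)) (at t)"
    by (auto intro!: derivative_eq_intros)
  have "((\<lambda>s. f (p + s *\<^sub>R v)) has_derivative (\<lambda>s. frechet_derivative f (at ?q) (s *\<^sub>R v))) (at t)"
    using diff_chain_at[OF l] d by (simp add: o_def)
  then show ?thesis
    by (rule has_derivative_imp_has_field_derivative) (simp add: linear_cmul[OF lin])
qed

lemma dirD_eq_frechet_derivative:
  fixes f :: "'a::real_normed_vector \<Rightarrow> real"
  assumes "f differentiable (at p)"
  shows "dirD f v p = frechet_derivative f (at p) v"
  unfolding dirD_def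
  using has_real_derivative_frechet_derivative_line[of f p 0 v] assms by (simp add: DERIV_imp_deriv)

lemma has_real_derivative_dirD_line:
  fixes f :: "'a::real_normed_vector \<Rightarrow> real"
  assumes "f differentiable (at (p + t *\<^sub>R v))"
  shows "((\<lambda>s. f (p + s *\<^sub>R v)) has_real_derivative dirD f v (p + t *\<^sub>R v)) (at t)"
  using has_real_derivative_frechet_derivative_line[OF assms] dirD_eq_frechet_derivative[OF assms]
  by simp

lemma has_real_derivative_dirD:
  fixes f :: "'a::real_normed_vector \<Rightarrow> real"
  assumes "f differentiable (at p)"
  shows "((\<lambda>t. f (p + t *\<^sub>R v)) has_real_derivative dirD f v p) (at 0)"
  using has_real_derivative_dirD_line[of f p 0 v] assms by simp

lemma eventually_line_in_open:
  fixes p :: "'a::real_normed_vector"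
  assumes "open W" "p \<in> W"
  shows "eventually (\<lambda>t. p + t *\<^sub>R v \<in> W) (nhds (0::real))"
proof -
  have "continuous (at 0) (\<lambda>t::real. p + t *\<^sub>R v)" by (intro continuous_intros)
  then show ?thesis using assms unfolding continuous_at_open eventually_nhds by force
qed

lemma dirD_cong_open:
  fixes f g :: "'a::real_normed_vector \<Rightarrow> real"
  assumes "open W" "p \<in> W" "\<And>q. q \<in> W \<Longrightarrow> f q = g q"
  shows "dirD f v p = dirD g v p"
  unfolding dirD_def
  by (rule deriv_cong_ev[OF _ refl])
     (use eventually_line_in_open[OF assms(1,2), of v] assms(3) in \<open>auto elim: eventually_mono\<close>)

lemma dirD_const [simp]: "dirD (\<lambda>_. c) v = (\<lambda>_. 0)"
  unfolding dirD_def by (simp add: fun_eq_iff)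

lemma dirD_add:
  fixes f g :: "'a::real_normed_vector \<Rightarrow> real"
  assumes "f differentiable (at p)" "g differentiable (at p)"
  shows "dirD (\<lambda>q. f q + g q) v p = dirD f v p + dirD g v p"
  unfolding dirD_def[of "\<lambda>q. f q + g q"]
  by (rule DERIV_imp_deriv) (intro DERIV_add has_real_derivative_dirD assms)

lemma dirD_diff:
  fixes f g :: "'a::real_normed_vector \<Rightarrow> real"
  assumes "f differentiable (at p)" "g differentiable (at p)"
  shows "dirD (\<lambda>q. f q - g q) v p = dirD f v p - dirD g v p"
  unfolding dirD_def[of "\<lambda>q. f q - g q"]
  by (rule DERIV_imp_deriv) (intro DERIV_diff has_real_derivative_dirD assms)

lemma dirD_mult:
  fixes f g :: "'a::real_normed_vector \<Rightarrow> real"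
  assumes "f differentiable (at p)" "g differentiable (at p)"
  shows "dirD (\<lambda>q. f q * g q) v p = f p * dirD g v p + dirD f v p * g p"
proof -
  have "((\<lambda>t. f (p + t *\<^sub>R v) * g (p + t *\<^sub>R v)) has_real_derivative
      (f (p + 0 *\<^sub>R v) * dirD g v p + dirD f v p * g (p + 0 *\<^sub>R v))) (at 0)"
    by (intro DERIV_mult' has_real_derivative_dirD assms)
  then show ?thesis unfolding dirD_def[of "\<lambda>q. f q * g q"]
    by (intro DERIV_imp_deriv) simp
qed

lemma dirD_cmult:
  fixes f :: "'a::real_normed_vector \<Rightarrow> real"
  assumes "f differentiable (at p)"
  shows "dirD (\<lambda>q. c * f q) v p = c * dirD f v p"
  using dirD_mult[OF differentiable_const assms, of c v] by simp

lemma dirD_sum: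
  fixes f :: "'i \<Rightarrow> 'a::real_normed_vector \<Rightarrow> real"
  assumes "finite I" "\<And>i. i \<in> I \<Longrightarrow> f i differentiable (at p)"
  shows "dirD (\<lambda>q. \<Sum>i\<in>I. f i q) v p = (\<Sum>i\<in>I. dirD (f i) v p)"
  using assms
proof (induction I rule: finite_induct)
  case (insert x I)
  then have "dirD (\<lambda>q. f x q + (\<Sum>i\<in>I. f i q)) v p = dirD (f x) v p + dirD (\<lambda>q. \<Sum>i\<in>I. f i q) v p"
    by (intro dirD_add) (auto intro!: differentiable_sum)
  with insert show ?case by simp
qed simp

lemma differentiable_prod:
  fixes f :: "'i \<Rightarrow> 'a::real_normed_vector \<Rightarrow> real"
  assumes "finite I" "\<And>i. i \<in> I \<Longrightarrow> f i differentiable (at p)"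
  shows "(\<lambda>q. \<Prod>i\<in>I. f i q) differentiable (at p)"
  using assms by (induction I rule: finite_induct) auto

lemma dirD_prod:
  fixes f :: "'i \<Rightarrow> 'a::real_normed_vector \<Rightarrow> real"
  assumes "finite I" "\<And>i. i \<in> I \<Longrightarrow> f i differentiable (at p)"
  shows "dirD (\<lambda>q. \<Prod>i\<in>I. f i q) v p = (\<Sum>i\<in>I. dirD (f i) v p * (\<Prod>k\<in>I - {i}. f k p))"
  using assms
proof (induction I rule: finite_induct)
  case (insert x I)
  have "dirD (\<lambda>q. f x q * (\<Prod>i\<in>I. f i q)) v p
      = f x p * dirD (\<lambda>q. \<Prod>i\<in>I. f i q) v p + dirD (f x) v p * (\<Prod>i\<in>I. f i p)"
    using insert by (intro dirD_mult) (auto intro!: differentiable_prod)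
  moreover have "(\<Prod>k\<in>insert x I - {i}. f k p) = f x p * (\<Prod>k\<in>I - {i}. f k p)" if "i \<in> I" for i
  proof -
    have "insert x I - {i} = insert x (I - {i})" using that insert by auto
    then show ?thesis using insert by simp
  qed
  moreover have "insert x I - {x} = I" using insert by auto
  ultimately show ?case using insert by (simp add: sum_distrib_left algebra_simps)
qed simp

lemma dirD_inverse:
  fixes f :: "'a::real_normed_vector \<Rightarrow> real"
  assumes "f differentiable (at p)" "f p \<noteq> 0"
  shows "dirD (\<lambda>q. 1 / f q) v p = - dirD f v p / (f p)^2"
proof -
  have "((\<lambda>t. inverse (f (p + t *\<^sub>R v))) has_real_derivative
      - (dirD f v p * inverse (f (p + 0 *\<^sub>R v) ^ Suc (Suc 0)))) (at 0)"
    by (intro DERIV_inverse_fun has_real_derivative_dirD assms) (use assms in simp)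
  then show ?thesis unfolding dirD_def[of "\<lambda>q. 1 / f q"]
    by (intro DERIV_imp_deriv) (simp add: divide_inverse power2_eq_square)
qed

lemma DERIV_ln_abs:
  fixes x :: real
  assumes "x \<noteq> 0"
  shows "DERIV (\<lambda>x. ln \<bar>x\<bar>) x :> 1 / x"
proof (cases "x > 0")
  case True
  have d: "DERIV (\<lambda>z. ln z) x :> 1 / x" using True by (auto intro!: derivative_eq_intros)
  have e: "eventually (\<lambda>z. ln z = ln \<bar>z\<bar>) (nhds x)"
    using True by (auto simp: eventually_nhds_metric dist_real_def intro!: exI[of _ x])
  show ?thesis using DERIV_cong_ev[OF refl e refl] d by simp
next
  case False
  then have n: "x < 0" using assms by auto
  have d: "DERIV (\<lambda>z. ln (- z)) x :> 1 / x" using n by (auto intro!: derivative_eq_intros)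
  have e: "eventually (\<lambda>z. ln (- z) = ln \<bar>z\<bar>) (nhds x)"
    using n by (auto simp: eventually_nhds_metric dist_real_def intro!: exI[of _ "- x"])
  show ?thesis using DERIV_cong_ev[OF refl e refl] d by simp
qed

lemma dirD_ln_abs:
  fixes f :: "'a::real_normed_vector \<Rightarrow> real"
  assumes "f differentiable (at p)" "f p \<noteq> 0"
  shows "dirD (\<lambda>q. ln \<bar>f q\<bar>) v p = dirD f v p / f p"
proof -
  have "((\<lambda>t. ln \<bar>f (p + t *\<^sub>R v)\<bar>) has_real_derivative (1 / f p) * dirD f v p) (at 0)"
    using DERIV_chain2[OF DERIV_ln_abs has_real_derivative_dirD[OF assms(1)]] assms(2) by simp
  then show ?thesis unfolding dirD_def[of "\<lambda>q. ln \<bar>f q\<bar>"]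
    by (intro DERIV_imp_deriv) simp
qed

lemma differentiable_ln_abs:
  fixes f :: "'a::real_normed_vector \<Rightarrow> real"
  assumes "f differentiable (at p)" "f p \<noteq> 0"
  shows "(\<lambda>q. ln \<bar>f q\<bar>) differentiable (at p)"
proof -
  have "(\<lambda>x::real. ln \<bar>x\<bar>) differentiable (at (f p))"
    using DERIV_ln_abs[OF assms(2)] unfolding has_field_derivative_def differentiable_def by blast
  then show ?thesis using differentiable_chain_at[OF assms(1)] by (simp add: o_def)
qed

lemma dirD_bounded_linear:
  assumes "bounded_linear f"
  shows "dirD f v = (\<lambda>_. f v)"
proof
  fix p
  have "frechet_derivative f (at p) = f"
    using frechet_derivative_at[OF bounded_linear_imp_has_derivative[OF assms]] by simp
  then show "dirD f v p = f v"
    by (simp add: dirD_eq_frechet_derivative assms bounded_linear_imp_differentiable)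
qed

lemma dirD_fst:
  fixes k :: "'a::real_normed_vector \<Rightarrow> real"
  shows "dirD (\<lambda>p::'a \<times> 'b::real_normed_vector. k (fst p)) v = (\<lambda>p. dirD k (fst v) (fst p))"
  unfolding dirD_def by simp

text \<open>A finite-order version of \<^const>\<open>smooth_on\<close>, so that its closure properties can be
  proved by induction on the order.\<close>

definition smooth_upto :: "'a::real_normed_vector set \<Rightarrow> nat \<Rightarrow> ('a \<Rightarrow> real) \<Rightarrow> bool" where
  "smooth_upto W n f \<longleftrightarrow>
     (\<forall>vs. length vs \<le> n \<longrightarrow> (\<forall>p\<in>W. foldr (\<lambda>v g. dirD g v) vs f differentiable (at p)))"

lemma smooth_on_iff_smooth_upto: "smooth_on W f \<longleftrightarrow> (\<forall>n. smooth_upto W n f)"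
  unfolding smooth_on_def smooth_upto_def by (meson le_refl)

lemma smooth_upto_0: "smooth_upto W 0 f \<longleftrightarrow> (\<forall>p\<in>W. f differentiable (at p))"
  by (simp add: smooth_upto_def)

lemma smooth_upto_Suc:
  "smooth_upto W (Suc n) f \<longleftrightarrow> (\<forall>p\<in>W. f differentiable (at p)) \<and> (\<forall>v. smooth_upto W n (dirD f v))"
proof
  assume A: "smooth_upto W (Suc n) f"
  show "(\<forall>p\<in>W. f differentiable (at p)) \<and> (\<forall>v. smooth_upto W n (dirD f v))"
    unfolding smooth_upto_def
  proof (intro conjI allI impI ballI)
    show "f differentiable (at p)" if "p \<in> W" for p
      using A[unfolded smooth_upto_def, rule_format, of "[]"] that by simp
    show "foldr (\<lambda>v g. dirD g v) vs (dirD f v) differentiable (at p)"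
      if "length vs \<le> n" "p \<in> W" for v vs p
      using A[unfolded smooth_upto_def, rule_format, of "vs @ [v]" p] that by simp
  qed
next
  assume B: "(\<forall>p\<in>W. f differentiable (at p)) \<and> (\<forall>v. smooth_upto W n (dirD f v))"
  show "smooth_upto W (Suc n) f" unfolding smooth_upto_def
  proof (intro allI impI ballI)
    fix vs :: "'a list" and p assume l: "length vs \<le> Suc n" and p: "p \<in> W"
    show "foldr (\<lambda>v g. dirD g v) vs f differentiable (at p)"
    proof (cases vs rule: rev_cases)
      case Nil then show ?thesis using B p by simp
    next
      case (snoc ws v)
      then show ?thesis using B p l unfolding smooth_upto_def by simp
    qed
  qed
qed

lemma smooth_upto_SucD: "smooth_upto W (Suc n) f \<Longrightarrow> smooth_upto W n f"
  by (auto simp: smooth_upto_def)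

lemma differentiable_cong_open:
  fixes f g :: "'a::real_normed_vector \<Rightarrow> real"
  assumes "open W" "p \<in> W" "\<And>q. q \<in> W \<Longrightarrow> f q = g q" "f differentiable (at p)"
  shows "g differentiable (at p)"
  using assms has_derivative_transform_within_open unfolding differentiable_def by blast

lemma smooth_upto_cong:
  assumes "open W" "\<And>q. q \<in> W \<Longrightarrow> f q = g q" "smooth_upto W n f"
  shows "smooth_upto W n g"
  using assms(2,3)
proof (induction n arbitrary: f g)
  case 0
  then show ?case
    unfolding smooth_upto_0 using differentiable_cong_open[OF assms(1)] by blast
next
  case (Suc n)
  have "\<forall>p\<in>W. g differentiable (at p)"
    using Suc.prems differentiable_cong_open[OF assms(1)] unfolding smooth_upto_Suc by blast
  moreover have "smooth_upto W n (dirD g v)" for v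
    using Suc.IH[of "dirD f v" "dirD g v"] Suc.prems dirD_cong_open[OF assms(1)]
    unfolding smooth_upto_Suc by blast
  ultimately show ?case unfolding smooth_upto_Suc by blast
qed

lemma smooth_upto_const [simp]: "smooth_upto W n (\<lambda>_. c)"
  by (induction n arbitrary: c) (auto simp: smooth_upto_0 smooth_upto_Suc)

lemma smooth_upto_add:
  assumes "open W" "smooth_upto W n f" "smooth_upto W n g"
  shows "smooth_upto W n (\<lambda>q. f q + g q)"
  using assms(2,3)
proof (induction n arbitrary: f g)
  case (Suc n)
  have d: "\<forall>p\<in>W. f differentiable (at p)" "\<forall>p\<in>W. g differentiable (at p)"
    using Suc.prems unfolding smooth_upto_Suc by auto
  have "smooth_upto W n (dirD (\<lambda>q. f q + g q) v)" for v
  proof (rule smooth_upto_cong[OF assms(1)])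
    show "smooth_upto W n (\<lambda>q. dirD f v q + dirD g v q)"
      using Suc.prems by (intro Suc.IH) (auto simp: smooth_upto_Suc)
  qed (use d in \<open>simp add: dirD_add\<close>)
  then show ?case using d by (auto simp: smooth_upto_Suc)
qed (auto simp: smooth_upto_0)

lemma smooth_upto_mult:
  assumes "open W" "smooth_upto W n f" "smooth_upto W n g"
  shows "smooth_upto W n (\<lambda>q. f q * g q)"
  using assms(2,3)
proof (induction n arbitrary: f g)
  case (Suc n)
  have d: "\<forall>p\<in>W. f differentiable (at p)" "\<forall>p\<in>W. g differentiable (at p)"
    using Suc.prems unfolding smooth_upto_Suc by auto
  have "smooth_upto W n (dirD (\<lambda>q. f q * g q) v)" for v
  proof (rule smooth_upto_cong[OF assms(1)])
    show "smooth_upto W n (\<lambda>q. f q * dirD g v q + dirD f v q * g q)"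
      using Suc.prems smooth_upto_SucD[of W n f] smooth_upto_SucD[of W n g]
      by (intro smooth_upto_add[OF assms(1)] Suc.IH) (auto simp: smooth_upto_Suc)
  qed (use d in \<open>simp add: dirD_mult\<close>)
  then show ?case using d by (auto simp: smooth_upto_Suc)
qed (auto simp: smooth_upto_0)

lemma smooth_upto_cmult: "open W \<Longrightarrow> smooth_upto W n f \<Longrightarrow> smooth_upto W n (\<lambda>q. c * f q)"
  using smooth_upto_mult[of W n "\<lambda>_. c" f] by simp

lemma smooth_upto_diff:
  assumes "open W" "smooth_upto W n f" "smooth_upto W n g"
  shows "smooth_upto W n (\<lambda>q. f q - g q)"
  using smooth_upto_add[OF assms(1,2) smooth_upto_cmult[OF assms(1,3), of "-1"]] by simp

lemma smooth_upto_sum: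
  assumes "open W" "finite I" "\<And>i. i \<in> I \<Longrightarrow> smooth_upto W n (f i)"
  shows "smooth_upto W n (\<lambda>q. \<Sum>i\<in>I. f i q)"
  using assms(2,3) by (induction I rule: finite_induct) (auto intro: smooth_upto_add[OF assms(1)])

lemma smooth_upto_prod:
  assumes "open W" "finite I" "\<And>i. i \<in> I \<Longrightarrow> smooth_upto W n (f i)"
  shows "smooth_upto W n (\<lambda>q. \<Prod>i\<in>I. f i q)"
  using assms(2,3) by (induction I rule: finite_induct) (auto intro: smooth_upto_mult[OF assms(1)])

lemma smooth_upto_inverse:
  assumes "open W" "\<And>q. q \<in> W \<Longrightarrow> f q \<noteq> 0" "smooth_upto W n f"
  shows "smooth_upto W n (\<lambda>q. 1 / f q)"
  using assms(3)
proof (induction n)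
  case 0 then show ?case using assms(2) by (auto simp: smooth_upto_0 intro!: differentiable_divide)
next
  case (Suc n)
  have d: "\<forall>p\<in>W. f differentiable (at p)"
    using Suc.prems unfolding smooth_upto_Suc by auto
  have IH: "smooth_upto W n (\<lambda>q. 1 / f q)" using Suc smooth_upto_SucD by blast
  have "smooth_upto W n (dirD (\<lambda>q. 1 / f q) v)" for v
  proof (rule smooth_upto_cong[OF assms(1)])
    show "smooth_upto W n (\<lambda>q. (- dirD f v q) * ((1 / f q) * (1 / f q)))"
      using Suc.prems IH
      by (intro smooth_upto_mult[OF assms(1)] smooth_upto_cmult[OF assms(1), of _ _ "-1", simplified])
        (auto simp: smooth_upto_Suc)
  qed (use d assms(2) in \<open>simp add: dirD_inverse power2_eq_square\<close>)
  then show ?case using d assms(2) by (auto simp: smooth_upto_Suc intro!: differentiable_divide)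
qed

lemma smooth_upto_ln_abs:
  assumes "open W" "\<And>q. q \<in> W \<Longrightarrow> f q \<noteq> 0" "smooth_upto W n f"
  shows "smooth_upto W n (\<lambda>q. ln \<bar>f q\<bar>)"
proof (cases n)
  case 0 then show ?thesis using assms by (auto simp: smooth_upto_0 intro!: differentiable_ln_abs)
next
  case (Suc m)
  have d: "\<forall>p\<in>W. f differentiable (at p)"
    using assms(3) unfolding Suc smooth_upto_Suc by auto
  have "smooth_upto W m (dirD (\<lambda>q. ln \<bar>f q\<bar>) v)" for v
  proof (rule smooth_upto_cong[OF assms(1)])
    show "smooth_upto W m (\<lambda>q. dirD f v q * (1 / f q))"
      using assms Suc smooth_upto_SucD
      by (intro smooth_upto_mult[OF assms(1)] smooth_upto_inverse[OF assms(1)]) (auto simp: smooth_upto_Suc)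
  qed (use d assms(2) in \<open>simp add: dirD_ln_abs\<close>)
  then show ?thesis using d assms(2) Suc by (auto simp: smooth_upto_Suc intro!: differentiable_ln_abs)
qed

lemma smooth_upto_bounded_linear: "bounded_linear f \<Longrightarrow> smooth_upto W n f"
  by (cases n) (auto simp: smooth_upto_0 smooth_upto_Suc dirD_bounded_linear bounded_linear_imp_differentiable)

lemma smooth_on_dirD: "smooth_on W f \<Longrightarrow> smooth_on W (dirD f v)"
  unfolding smooth_on_iff_smooth_upto using smooth_upto_Suc by blast

lemma smooth_on_imp_differentiable: "smooth_on W f \<Longrightarrow> p \<in> W \<Longrightarrow> f differentiable (at p)"
  unfolding smooth_on_iff_smooth_upto using smooth_upto_0 by blast

lemma smooth_on_cong: "open W \<Longrightarrow> (\<And>q. q \<in> W \<Longrightarrow> f q = g q) \<Longrightarrow> smooth_on W f \<Longrightarrow> smooth_on W g"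
  unfolding smooth_on_iff_smooth_upto using smooth_upto_cong by blast

lemma smooth_on_diff: "open W \<Longrightarrow> smooth_on W f \<Longrightarrow> smooth_on W g \<Longrightarrow> smooth_on W (\<lambda>q. f q - g q)"
  unfolding smooth_on_iff_smooth_upto using smooth_upto_diff by blast

lemma smooth_on_mult: "open W \<Longrightarrow> smooth_on W f \<Longrightarrow> smooth_on W g \<Longrightarrow> smooth_on W (\<lambda>q. f q * g q)"
  unfolding smooth_on_iff_smooth_upto using smooth_upto_mult by blast

lemma smooth_on_cmult: "open W \<Longrightarrow> smooth_on W f \<Longrightarrow> smooth_on W (\<lambda>q. c * f q)"
  unfolding smooth_on_iff_smooth_upto using smooth_upto_cmult by blast

lemma smooth_on_sum:
  "open W \<Longrightarrow> finite I \<Longrightarrow> (\<And>i. i \<in> I \<Longrightarrow> smooth_on W (f i)) \<Longrightarrow> smooth_on W (\<lambda>q. \<Sum>i\<in>I. f i q)"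
  unfolding smooth_on_iff_smooth_upto using smooth_upto_sum by blast

lemma smooth_on_prod:
  "open W \<Longrightarrow> finite I \<Longrightarrow> (\<And>i. i \<in> I \<Longrightarrow> smooth_on W (f i)) \<Longrightarrow> smooth_on W (\<lambda>q. \<Prod>i\<in>I. f i q)"
  unfolding smooth_on_iff_smooth_upto using smooth_upto_prod by blast

lemma smooth_on_inverse:
  "open W \<Longrightarrow> (\<And>q. q \<in> W \<Longrightarrow> f q \<noteq> 0) \<Longrightarrow> smooth_on W f \<Longrightarrow> smooth_on W (\<lambda>q. 1 / f q)"
  unfolding smooth_on_iff_smooth_upto using smooth_upto_inverse by blast

lemma smooth_on_ln_abs:
  "open W \<Longrightarrow> (\<And>q. q \<in> W \<Longrightarrow> f q \<noteq> 0) \<Longrightarrow> smooth_on W f \<Longrightarrow> smooth_on W (\<lambda>q. ln \<bar>f q\<bar>)"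
  unfolding smooth_on_iff_smooth_upto using smooth_upto_ln_abs by blast

lemma smooth_on_bounded_linear: "bounded_linear f \<Longrightarrow> smooth_on W f"
  unfolding smooth_on_iff_smooth_upto using smooth_upto_bounded_linear by blast

lemma smooth_on_fst:
  fixes k :: "'a::real_normed_vector \<Rightarrow> real"
  assumes "smooth_on U k"
  shows "smooth_on (U \<times> V) (\<lambda>p::'a \<times> 'b::real_normed_vector. k (fst p))"
proof -
  have foldr_fst: "foldr (\<lambda>v g. dirD g v) vs (\<lambda>p::'a \<times> 'b. k (fst p))
     = (\<lambda>p. foldr (\<lambda>v g. dirD g v) (map fst vs) k (fst p))" for vs
    by (induction vs) (simp_all add: dirD_fst)
  show ?thesis unfolding smooth_on_def foldr_fst
  proof (intro allI ballI)
    fix vs and p :: "'a \<times> 'b" assume "p \<in> U \<times> V"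
    then have "foldr (\<lambda>v g. dirD g v) (map fst vs) k differentiable (at (fst p))"
      using assms unfolding smooth_on_def by auto
    then show "(\<lambda>p. foldr (\<lambda>v g. dirD g v) (map fst vs) k (fst p)) differentiable (at p)"
      using differentiable_chain_at[of fst p] bounded_linear_imp_differentiable[OF bounded_linear_fst]
      by (auto simp: o_def)
  qed
qed

lemma smooth_on_det:
  fixes M :: "'a::real_normed_vector \<Rightarrow> real^'n::finite^'n"
  assumes "open W" "\<And>i j. smooth_on W (\<lambda>q. M q $ i $ j)"
  shows "smooth_on W (\<lambda>q. det (M q))"
  unfolding det_def
  by (intro smooth_on_sum[OF assms(1)] smooth_on_cmult[OF assms(1)] smooth_on_prod[OF assms(1)] assms(2))
     (auto simp: finite_permutations)

section \<open>Symmetry of second derivatives\<close>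

lemma norm_box_combination:
  fixes a b :: "'a::real_normed_vector"
  assumes "0 \<le> t" "t \<le> h" "0 \<le> s" "s \<le> h"
  shows "norm (t *\<^sub>R a + s *\<^sub>R b) \<le> h * (norm a + norm b)"
proof -
  have "norm (t *\<^sub>R a + s *\<^sub>R b) \<le> t * norm a + s * norm b"
    using norm_triangle_ineq[of "t *\<^sub>R a" "s *\<^sub>R b"] assms by simp
  also have "\<dots> \<le> h * norm a + h * norm b"
    using assms by (intro add_mono mult_right_mono) auto
  finally show ?thesis by (simp add: distrib_left)
qed

lemma second_difference_mean_value:
  fixes f :: "'a::real_normed_vector \<Rightarrow> real"
  assumes h: "0 < h"
    and box: "\<And>t s. 0 \<le> t \<Longrightarrow> t \<le> h \<Longrightarrow> 0 \<le> s \<Longrightarrow> s \<le> h \<Longrightarrow> p + t *\<^sub>R a + s *\<^sub>R b \<in> W"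
    and fd: "\<And>q. q \<in> W \<Longrightarrow> f differentiable (at q)"
  obtains \<xi> where "0 < \<xi>" "\<xi> < h"
    "f (p + h *\<^sub>R a + h *\<^sub>R b) - f (p + h *\<^sub>R a) - f (p + h *\<^sub>R b) + f p
       = h * (dirD f a (p + \<xi> *\<^sub>R a + h *\<^sub>R b) - dirD f a (p + \<xi> *\<^sub>R a))"
proof -
  define \<phi> where "\<phi> t = f (p + h *\<^sub>R b + t *\<^sub>R a) - f (p + t *\<^sub>R a)" for t
  have der: "DERIV \<phi> t :> dirD f a (p + h *\<^sub>R b + t *\<^sub>R a) - dirD f a (p + t *\<^sub>R a)"
    if "0 \<le> t" "t \<le> h" for t
  proof -
    have "p + h *\<^sub>R b + t *\<^sub>R a \<in> W" using box[OF that, of h] h by (simp add: algebra_simps)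
    moreover have "p + t *\<^sub>R a \<in> W" using box[OF that, of 0] h by simp
    ultimately show ?thesis unfolding \<phi>_def
      by (intro DERIV_diff has_real_derivative_dirD_line fd)
  qed
  obtain \<xi> where \<xi>: "0 < \<xi>" "\<xi> < h"
    "\<phi> h - \<phi> 0 = (h - 0) * (dirD f a (p + h *\<^sub>R b + \<xi> *\<^sub>R a) - dirD f a (p + \<xi> *\<^sub>R a))"
    using MVT2[of 0 h \<phi> "\<lambda>t. dirD f a (p + h *\<^sub>R b + t *\<^sub>R a) - dirD f a (p + t *\<^sub>R a)"] der h
    by auto
  moreover have "f (p + h *\<^sub>R a + h *\<^sub>R b) - f (p + h *\<^sub>R a) - f (p + h *\<^sub>R b) + f p = \<phi> h - \<phi> 0"
    unfolding \<phi>_def by (simp add: algebra_simps)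
  ultimately show ?thesis using that by (simp add: algebra_simps)
qed

lemma has_derivative_increment_bound:
  fixes g :: "'a::real_normed_vector \<Rightarrow> real"
  assumes gd: "(g has_derivative L) (at p)" and \<epsilon>: "\<epsilon> > 0"
  obtains \<delta> where "\<delta> > 0"
    "\<And>u v. norm u < \<delta> \<Longrightarrow> norm v < \<delta> \<Longrightarrow> \<bar>g (p + u) - g (p + v) - L (u - v)\<bar> \<le> \<epsilon> * (norm u + norm v)"
proof -
  obtain \<delta> where \<delta>: "\<delta> > 0" "\<And>y. norm (y - p) < \<delta> \<Longrightarrow> \<bar>g y - g p - L (y - p)\<bar> \<le> \<epsilon> * norm (y - p)"
    using gd[unfolded has_derivative_at_alt] \<epsilon> by (metis real_norm_def)
  have lin: "linear L" using gd has_derivative_bounded_linear bounded_linear.linear by blast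
  have "\<bar>g (p + u) - g (p + v) - L (u - v)\<bar> \<le> \<epsilon> * (norm u + norm v)" if "norm u < \<delta>" "norm v < \<delta>" for u v
  proof -
    have "\<bar>g (p + u) - g (p + v) - L (u - v)\<bar> = \<bar>(g (p + u) - g p - L u) - (g (p + v) - g p - L v)\<bar>"
      by (simp add: linear_diff[OF lin])
    also have "\<dots> \<le> \<epsilon> * norm u + \<epsilon> * norm v"
      using \<delta>(2)[of "p + u"] \<delta>(2)[of "p + v"] that by simp
    finally show ?thesis by (simp add: distrib_left)
  qed
  with \<delta>(1) show ?thesis using that by blast
qed

lemma second_difference_estimate:
  fixes f :: "'a::real_normed_vector \<Rightarrow> real"
  assumes h: "0 < h"
    and box: "\<And>t s. 0 \<le> t \<Longrightarrow> t \<le> h \<Longrightarrow> 0 \<le> s \<Longrightarrow> s \<le> h \<Longrightarrow> p + t *\<^sub>R a + s *\<^sub>R b \<in> W"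
    and fd: "\<And>q. q \<in> W \<Longrightarrow> f differentiable (at q)"
    and lin: "linear L" and \<epsilon>: "\<epsilon> \<ge> 0"
    and approx: "\<And>u v. norm u \<le> h * (norm a + norm b) \<Longrightarrow> norm v \<le> h * (norm a + norm b) \<Longrightarrow>
      \<bar>dirD f a (p + u) - dirD f a (p + v) - L (u - v)\<bar> \<le> \<epsilon> * (norm u + norm v)"
  shows "\<bar>f (p + h *\<^sub>R a + h *\<^sub>R b) - f (p + h *\<^sub>R a) - f (p + h *\<^sub>R b) + f p - h\<^sup>2 * L b\<bar>
    \<le> 2 * \<epsilon> * h\<^sup>2 * (norm a + norm b)"
proof -
  obtain \<xi> where \<xi>: "0 < \<xi>" "\<xi> < h"
    "f (p + h *\<^sub>R a + h *\<^sub>R b) - f (p + h *\<^sub>R a) - f (p + h *\<^sub>R b) + f p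
       = h * (dirD f a (p + \<xi> *\<^sub>R a + h *\<^sub>R b) - dirD f a (p + \<xi> *\<^sub>R a))"
    using second_difference_mean_value[OF h box fd] by blast
  define u where "u = \<xi> *\<^sub>R a + h *\<^sub>R b"
  define v where "v = \<xi> *\<^sub>R a + 0 *\<^sub>R b"
  have norms: "norm u \<le> h * (norm a + norm b)" "norm v \<le> h * (norm a + norm b)"
    unfolding u_def v_def using \<xi> h norm_box_combination[of \<xi> h h a b] norm_box_combination[of \<xi> h 0 a b]
    by auto
  have "L (u - v) = h * L b" by (simp add: u_def v_def linear_cmul[OF lin])
  then have "f (p + h *\<^sub>R a + h *\<^sub>R b) - f (p + h *\<^sub>R a) - f (p + h *\<^sub>R b) + f p - h\<^sup>2 * L b
      = h * (dirD f a (p + u) - dirD f a (p + v) - L (u - v))"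
    unfolding \<xi>(3) by (simp add: u_def v_def add.assoc power2_eq_square right_diff_distrib)
  then have "\<bar>f (p + h *\<^sub>R a + h *\<^sub>R b) - f (p + h *\<^sub>R a) - f (p + h *\<^sub>R b) + f p - h\<^sup>2 * L b\<bar>
      = h * \<bar>dirD f a (p + u) - dirD f a (p + v) - L (u - v)\<bar>"
    using h by (simp add: abs_mult)
  also have "\<dots> \<le> h * (\<epsilon> * (norm u + norm v))"
    using approx[OF norms] h by simp
  also have "\<dots> \<le> h * (\<epsilon> * (2 * (h * (norm a + norm b))))"
    using norms h \<epsilon> by (intro mult_left_mono) auto
  finally show ?thesis by (simp add: power2_eq_square algebra_simps)
qed

lemma second_difference_tendsto_dirD_dirD:
  fixes f :: "'a::real_normed_vector \<Rightarrow> real"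
  assumes W: "open W" "p \<in> W" and fd: "\<And>q. q \<in> W \<Longrightarrow> f differentiable (at q)"
    and ga: "dirD f a differentiable (at p)" and e: "e > 0"
  shows "\<exists>d>0. \<forall>h. 0 < h \<and> h < d \<longrightarrow>
    \<bar>(f (p + h *\<^sub>R a + h *\<^sub>R b) - f (p + h *\<^sub>R a) - f (p + h *\<^sub>R b) + f p) / h^2 - dirD (dirD f a) b p\<bar> \<le> e"
proof -
  define L where "L = frechet_derivative (dirD f a) (at p)"
  have gd: "(dirD f a has_derivative L) (at p)" using ga frechet_derivative_works L_def by blast
  have lin: "linear L" using gd has_derivative_bounded_linear bounded_linear.linear by blast
  have D: "dirD (dirD f a) b p = L b" using dirD_eq_frechet_derivative[OF ga] L_def by simp
  define K where "K = norm a + norm b + 1"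
  have K: "K > 0" "norm a + norm b < K" unfolding K_def by (simp_all add: add_nonneg_pos)
  obtain \<delta> where \<delta>: "\<delta> > 0" "\<And>u v. norm u < \<delta> \<Longrightarrow> norm v < \<delta> \<Longrightarrow>
      \<bar>dirD f a (p + u) - dirD f a (p + v) - L (u - v)\<bar> \<le> e / (2 * K) * (norm u + norm v)"
    using has_derivative_increment_bound[OF gd, of "e / (2 * K)"] e K by auto
  obtain r where r: "r > 0" "ball p r \<subseteq> W" using W openE by blast
  show ?thesis
  proof (intro exI[of _ "min \<delta> r / K"] conjI allI impI)
    show "min \<delta> r / K > 0" using \<delta> r K by simp
    fix h :: real assume h: "0 < h \<and> h < min \<delta> r / K"
    then have "h * K < min \<delta> r" using K by (simp add: pos_less_divide_eq)
    moreover have "h * (norm a + norm b) \<le> h * K" using h K by (intro mult_left_mono) auto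
    ultimately have small: "h * (norm a + norm b) < min \<delta> r" by linarith
    have "p + t *\<^sub>R a + s *\<^sub>R b \<in> W" if "0 \<le> t" "t \<le> h" "0 \<le> s" "s \<le> h" for t s
    proof -
      have "dist p (p + u) = norm u" for u :: 'a by (simp add: dist_norm)
      then have "p + (t *\<^sub>R a + s *\<^sub>R b) \<in> ball p r"
        using norm_box_combination[OF that, of a b] small by simp
      then show ?thesis using r by (auto simp: add.assoc)
    qed
    then have "\<bar>f (p + h *\<^sub>R a + h *\<^sub>R b) - f (p + h *\<^sub>R a) - f (p + h *\<^sub>R b) + f p - h\<^sup>2 * L b\<bar>
        \<le> 2 * (e / (2 * K)) * h\<^sup>2 * (norm a + norm b)"
      using h small \<delta>(2) e K by (intro second_difference_estimate[OF _ _ fd lin]) auto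
    also have "\<dots> = e / K * h\<^sup>2 * (norm a + norm b)" using K by simp
    also have "\<dots> \<le> e / K * h\<^sup>2 * K"
      using K e by (intro mult_left_mono) auto
    also have "\<dots> = e * h\<^sup>2" using K by simp
    finally show "\<bar>(f (p + h *\<^sub>R a + h *\<^sub>R b) - f (p + h *\<^sub>R a) - f (p + h *\<^sub>R b) + f p) / h^2
        - dirD (dirD f a) b p\<bar> \<le> e"
      using h by (simp add: D field_simps abs_divide)
  qed
qed

text \<open>Schwarz's theorem: both mixed second derivatives are limits of the same second difference
  quotient.\<close>

lemma dirD_dirD_commute:
  fixes f :: "'a::real_normed_vector \<Rightarrow> real"
  assumes W: "open W" "p \<in> W" and fd: "\<And>q. q \<in> W \<Longrightarrow> f differentiable (at q)"
    and ga: "dirD f a differentiable (at p)" and gb: "dirD f b differentiable (at p)"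
  shows "dirD (dirD f a) b p = dirD (dirD f b) a p"
proof (rule ccontr)
  define \<Delta> where "\<Delta> h = (f (p + h *\<^sub>R a + h *\<^sub>R b) - f (p + h *\<^sub>R a) - f (p + h *\<^sub>R b) + f p) / h^2" for h
  assume ne: "dirD (dirD f a) b p \<noteq> dirD (dirD f b) a p"
  define e where "e = \<bar>dirD (dirD f a) b p - dirD (dirD f b) a p\<bar> / 4"
  have e: "e > 0" using ne by (simp add: e_def)
  obtain d1 where d1: "d1 > 0" "\<forall>h. 0 < h \<and> h < d1 \<longrightarrow> \<bar>\<Delta> h - dirD (dirD f a) b p\<bar> \<le> e"
    using second_difference_tendsto_dirD_dirD[OF W fd ga e] unfolding \<Delta>_def by blast
  obtain d2 where "d2 > 0" "\<forall>h. 0 < h \<and> h < d2 \<longrightarrow>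
    \<bar>(f (p + h *\<^sub>R b + h *\<^sub>R a) - f (p + h *\<^sub>R b) - f (p + h *\<^sub>R a) + f p) / h^2 - dirD (dirD f b) a p\<bar> \<le> e"
    using second_difference_tendsto_dirD_dirD[OF W fd gb e] by blast
  then have d2: "\<forall>h. 0 < h \<and> h < d2 \<longrightarrow> \<bar>\<Delta> h - dirD (dirD f b) a p\<bar> \<le> e"
    unfolding \<Delta>_def by (simp add: algebra_simps)
  define h where "h = min d1 d2 / 2"
  have "0 < h" "h < d1" "h < d2" using d1 \<open>d2 > 0\<close> by (auto simp: h_def)
  then have "\<bar>\<Delta> h - dirD (dirD f a) b p\<bar> \<le> e" "\<bar>\<Delta> h - dirD (dirD f b) a p\<bar> \<le> e"
    using d1 d2 by auto
  then show False using e unfolding e_def by (simp add: abs_le_iff abs_if split: if_splits)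
qed

lemma smooth_on_dirD_commute:
  fixes f :: "'a::real_normed_vector \<Rightarrow> real"
  assumes "open W" "p \<in> W" "smooth_on W f"
  shows "dirD (dirD f a) b p = dirD (dirD f b) a p"
  using assms
  by (intro dirD_dirD_commute[OF assms(1,2)]) (auto intro: smooth_on_imp_differentiable smooth_on_dirD)

section \<open>Jacobi's formula\<close>

lemma matrix_mul_matrix_inv:
  fixes A :: "'a::field^'n::finite^'n"
  assumes "det A \<noteq> 0"
  shows "A ** matrix_inv A = mat 1" "matrix_inv A ** A = mat 1"
proof -
  have "invertible A" using assms invertible_det_nz by blast
  then have "\<exists>A'. A ** A' = mat 1 \<and> A' ** A = mat 1" unfolding invertible_def by blast
  then have "A ** matrix_inv A = mat 1 \<and> matrix_inv A ** A = mat 1"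
    unfolding matrix_inv_def by (rule someI_ex)
  then show "A ** matrix_inv A = mat 1" "matrix_inv A ** A = mat 1" by auto
qed

lemma matrix_inv_cramer:
  fixes A :: "'a::field^'n::finite^'n"
  assumes "det A \<noteq> 0"
  shows "matrix_inv A $ k $ j = det (\<chi> r c. if c = k then axis j 1 $ r else A $ r $ c) / det A"
proof -
  define x where "x = matrix_inv A *v axis j 1"
  have "A *v x = axis j 1"
    unfolding x_def matrix_vector_mul_assoc matrix_mul_matrix_inv[OF assms] by simp
  then have "x = (\<chi> k. det (\<chi> i l. if l = k then axis j 1 $ i else A $ i $ l) / det A)"
    using cramer[OF assms] by blast
  moreover have "x $ k = matrix_inv A $ k $ j"
  proof -
    have "x $ k = (\<Sum>l\<in>UNIV. if l = j then matrix_inv A $ k $ l else 0)"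
      unfolding x_def matrix_vector_mult_def by (simp add: axis_def if_distrib cong: if_cong)
    then show ?thesis by simp
  qed
  ultimately show ?thesis by simp
qed

lemma matrix_inv_symmetric:
  fixes A :: "'a::field^'n::finite^'n"
  assumes "det A \<noteq> 0" "transpose A = A"
  shows "matrix_inv A $ i $ j = matrix_inv A $ j $ i"
proof -
  let ?B = "matrix_inv A"
  have "transpose ?B ** A = mat 1"
    using matrix_mul_matrix_inv(1)[OF assms(1)] assms(2)
    by (metis matrix_transpose_mul transpose_mat)
  then have "transpose ?B = ?B"
    by (metis matrix_mul_matrix_inv(1)[OF assms(1)] matrix_mul_assoc matrix_mul_lid matrix_mul_rid)
  then show ?thesis by (metis transpose_def vec_lambda_beta)
qed

lemma det_replace_row:
  fixes A :: "'a::field^'n::finite^'n"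
  assumes "det A \<noteq> 0"
  shows "det (\<chi> k l. if k = i then r $ l else A $ k $ l) = det A * (\<Sum>j\<in>UNIV. r $ j * matrix_inv A $ j $ i)"
proof -
  define x where "x = r v* matrix_inv A"
  have s: "(\<Sum>l\<in>UNIV. x $ l *s row l A) = x v* A"
    by (simp add: vec_eq_iff vector_matrix_mult_def row_def sum_component mult.commute)
  have r: "x v* A = r" unfolding x_def vector_matrix_mul_assoc matrix_mul_matrix_inv[OF assms] by simp
  have m: "(\<chi> k. if k = i then (\<Sum>l\<in>UNIV. x $ l *s row l A) else row k A) = (\<chi> k l. if k = i then r $ l else A $ k $ l)"
    unfolding s r by (simp add: vec_eq_iff row_def)
  have "det (\<chi> k l. if k = i then r $ l else A $ k $ l) = x $ i * det A"
    using cramer_lemma_transpose[of i x A] unfolding m .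
  moreover have "x $ i = (\<Sum>j\<in>UNIV. r $ j * matrix_inv A $ j $ i)"
    unfolding x_def vector_matrix_mult_def by simp
  ultimately show ?thesis by simp
qed

lemma prod_UNIV_if_eq:
  fixes a b :: "'n::finite \<Rightarrow> 'a::comm_monoid_mult"
  shows "(\<Prod>k\<in>UNIV. if k = i then a k else b k) = a i * (\<Prod>k\<in>UNIV - {i}. b k)"
proof -
  have "(\<Prod>k\<in>UNIV. if k = i then a k else b k) = (if i = i then a i else b i) * (\<Prod>k\<in>UNIV - {i}. if k = i then a k else b k)"
    by (rule prod.remove) auto
  also have "(\<Prod>k\<in>UNIV - {i}. if k = i then a k else b k) = (\<Prod>k\<in>UNIV - {i}. b k)"
    by (rule prod.cong) auto
  finally show ?thesis by simp
qed

lemma dirD_det: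
  fixes M :: "'a::real_normed_vector \<Rightarrow> real^'n::finite^'n"
  assumes d: "\<And>i j. (\<lambda>q. M q $ i $ j) differentiable (at p)"
  shows "dirD (\<lambda>q. det (M q)) v p =
    (\<Sum>i\<in>UNIV. det (\<chi> k l. if k = i then dirD (\<lambda>q. M q $ k $ l) v p else M p $ k $ l))"
proof -
  let ?P = "{\<pi>. \<pi> permutes (UNIV :: 'n set)}"
  have fP: "finite ?P" by (simp add: finite_permutations)
  have "dirD (\<lambda>q. det (M q)) v p = dirD (\<lambda>q. \<Sum>\<pi>\<in>?P. of_int (sign \<pi>) * (\<Prod>i\<in>UNIV. M q $ i $ \<pi> i)) v p"
    unfolding det_def by simp
  also have "\<dots> = (\<Sum>\<pi>\<in>?P. dirD (\<lambda>q. of_int (sign \<pi>) * (\<Prod>i\<in>UNIV. M q $ i $ \<pi> i)) v p)"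
    using d by (intro dirD_sum fP) (auto intro!: differentiable_prod differentiable_mult)
  also have "\<dots> = (\<Sum>\<pi>\<in>?P. of_int (sign \<pi>) * (\<Sum>i\<in>UNIV. dirD (\<lambda>q. M q $ i $ \<pi> i) v p * (\<Prod>k\<in>UNIV - {i}. M p $ k $ \<pi> k)))"
    using d by (intro sum.cong refl) (simp add: dirD_cmult differentiable_prod dirD_prod)
  also have "\<dots> = (\<Sum>i\<in>UNIV. \<Sum>\<pi>\<in>?P. of_int (sign \<pi>) * (dirD (\<lambda>q. M q $ i $ \<pi> i) v p * (\<Prod>k\<in>UNIV - {i}. M p $ k $ \<pi> k)))"
    by (simp add: sum_distrib_left sum.swap[of _ ?P])
  also have "\<dots> = (\<Sum>i\<in>UNIV. det (\<chi> k l. if k = i then dirD (\<lambda>q. M q $ k $ l) v p else M p $ k $ l))"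
    unfolding det_def by (intro sum.cong refl) (simp add: prod_UNIV_if_eq)
  finally show ?thesis .
qed

lemma dirD_det_Jacobi:
  fixes M :: "'a::real_normed_vector \<Rightarrow> real^'n::finite^'n"
  assumes d: "\<And>i j. (\<lambda>q. M q $ i $ j) differentiable (at p)" and nz: "det (M p) \<noteq> 0"
  shows "dirD (\<lambda>q. det (M q)) v p =
    det (M p) * (\<Sum>i\<in>UNIV. \<Sum>j\<in>UNIV. dirD (\<lambda>q. M q $ i $ j) v p * matrix_inv (M p) $ j $ i)"
proof -
  have "dirD (\<lambda>q. det (M q)) v p =
    (\<Sum>i\<in>UNIV. det (\<chi> k l. if k = i then (\<chi> l. dirD (\<lambda>q. M q $ i $ l) v p) $ l else M p $ k $ l))"
    unfolding dirD_det[OF d] by (intro sum.cong refl arg_cong[where f=det]) (simp add: vec_eq_iff)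
  also have "\<dots> = (\<Sum>i\<in>UNIV. det (M p) * (\<Sum>j\<in>UNIV. dirD (\<lambda>q. M q $ i $ j) v p * matrix_inv (M p) $ j $ i))"
    by (intro sum.cong refl) (simp add: det_replace_row[OF nz])
  finally show ?thesis by (simp add: sum_distrib_left)
qed

lemma dirD_ln_abs_det:
  fixes M :: "'a::real_normed_vector \<Rightarrow> real^'n::finite^'n"
  assumes d: "\<And>i j. (\<lambda>q. M q $ i $ j) differentiable (at p)" and nz: "det (M p) \<noteq> 0"
  shows "dirD (\<lambda>q. ln \<bar>det (M q)\<bar>) v p =
    (\<Sum>i\<in>UNIV. \<Sum>j\<in>UNIV. dirD (\<lambda>q. M q $ i $ j) v p * matrix_inv (M p) $ j $ i)"
proof -
  have dd: "(\<lambda>q. det (M q)) differentiable (at p)"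
    unfolding det_def using d by (auto intro!: differentiable_sum differentiable_prod differentiable_mult)
  show ?thesis using dirD_ln_abs[OF dd, of v] nz dirD_det_Jacobi[OF d nz, of v] by simp
qed

lemma pd_const [simp]: "pd A (\<lambda>_. c) = (\<lambda>_. 0)"
  by (simp add: pd_def)

lemma pd_cong_open: "open W \<Longrightarrow> p \<in> W \<Longrightarrow> (\<And>q. q \<in> W \<Longrightarrow> f q = g q) \<Longrightarrow> pd A f p = pd A g p"
  unfolding pd_def by (rule dirD_cong_open)

lemma pd_add:
  "f differentiable (at p) \<Longrightarrow> g differentiable (at p) \<Longrightarrow> pd A (\<lambda>q. f q + g q) p = pd A f p + pd A g p"
  unfolding pd_def by (rule dirD_add)

lemma pd_diff:
  "f differentiable (at p) \<Longrightarrow> g differentiable (at p) \<Longrightarrow> pd A (\<lambda>q. f q - g q) p = pd A f p - pd A g p"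
  unfolding pd_def by (rule dirD_diff)

lemma pd_mult:
  "f differentiable (at p) \<Longrightarrow> g differentiable (at p) \<Longrightarrow> pd A (\<lambda>q. f q * g q) p = f p * pd A g p + pd A f p * g p"
  unfolding pd_def by (rule dirD_mult)

lemma pd_cmult: "f differentiable (at p) \<Longrightarrow> pd A (\<lambda>q. c * f q) p = c * pd A f p"
  unfolding pd_def by (rule dirD_cmult)

lemma pd_divide: "f differentiable (at p) \<Longrightarrow> pd A (\<lambda>q. f q / c) p = pd A f p / c"
  using pd_cmult[of f p A "1 / c"] by simp

lemma pd_sum:
  "finite I \<Longrightarrow> (\<And>i. i \<in> I \<Longrightarrow> f i differentiable (at p)) \<Longrightarrow> pd A (\<lambda>q. \<Sum>i\<in>I. f i q) p = (\<Sum>i\<in>I. pd A (f i) p)"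
  unfolding pd_def by (rule dirD_sum)

lemma smooth_on_const [simp]: "smooth_on W (\<lambda>_. c)"
  by (simp add: smooth_on_iff_smooth_upto)

lemma smooth_on_pd: "smooth_on W f \<Longrightarrow> smooth_on W (pd A f)"
  unfolding pd_def by (rule smooth_on_dirD)

lemma bounded_linear_snd_nth: "bounded_linear (\<lambda>p::('n::finite) pt. snd p $ l)"
  by (rule bounded_linear_compose[OF bounded_linear_vec_nth bounded_linear_snd])

lemma smooth_on_snd_nth: "smooth_on W (\<lambda>p::('n::finite) pt. snd p $ l)"
  by (rule smooth_on_bounded_linear[OF bounded_linear_snd_nth])

lemma Dx_snd_nth [simp]: "Dx m (\<lambda>p::('n::finite) pt. snd p $ l) q = 0"
  unfolding pd_def dirD_bounded_linear[OF bounded_linear_snd_nth] by (simp add: cvec_def)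

lemma Dy_snd_nth [simp]: "Dy m (\<lambda>p::('n::finite) pt. snd p $ l) q = (if l = m then 1 else 0)"
  unfolding pd_def dirD_bounded_linear[OF bounded_linear_snd_nth] by (simp add: cvec_def axis_def)

lemma dirD_vertical:
  fixes f :: "('n::finite) pt \<Rightarrow> real"
  assumes d: "f differentiable (at p)"
  shows "dirD f (0, v) p = (\<Sum>j\<in>UNIV. v $ j * Dy j f p)"
proof -
  have v: "(0, v) = (\<Sum>j\<in>UNIV. (v $ j) *\<^sub>R cvec (Inr j) :: 'n pt)"
    using basis_expansion[of v, unfolded scalar_mult_eq_scaleR]
    by (intro prod_eqI) (simp_all add: fst_sum snd_sum cvec_def)
  have lin: "linear (frechet_derivative f (at p))"
    using frechet_derivative_works[of f "at p"] d has_derivative_bounded_linear bounded_linear.linear by blast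
  show ?thesis
    unfolding dirD_eq_frechet_derivative[OF d] pd_def v
    by (simp add: linear_sum[OF lin] linear_cmul[OF lin] dirD_eq_frechet_derivative[OF d])
qed

lemma Dx_fst: "Dx b (\<lambda>q::('n::finite) pt. k (fst q)) = (\<lambda>q. dirD k (axis b 1) (fst q))"
  unfolding pd_def dirD_fst by (simp add: cvec_def)

lemma Dy_fst: "Dy b (\<lambda>q::('n::finite) pt. k (fst q)) = (\<lambda>_. 0)"
  unfolding pd_def dirD_fst by (simp add: cvec_def dirD_def)

section \<open>Positively homogeneous functions\<close>

definition homogeneous_on :: "('n::finite) pt set \<Rightarrow> real \<Rightarrow> ('n pt \<Rightarrow> real) \<Rightarrow> bool" where
  "homogeneous_on W k f \<longleftrightarrow> (\<forall>x y c. (x, y) \<in> W \<longrightarrow> c > 0 \<longrightarrow> f (x, c *\<^sub>R y) = c powr k * f (x, y))"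

lemma homogeneous_onD:
  "homogeneous_on W k f \<Longrightarrow> (x, y) \<in> W \<Longrightarrow> c > 0 \<Longrightarrow> f (x, c *\<^sub>R y) = c powr k * f (x, y)"
  unfolding homogeneous_on_def by blast

lemma homogeneous_on_mult:
  "homogeneous_on W k f \<Longrightarrow> homogeneous_on W l g \<Longrightarrow> m = k + l \<Longrightarrow> homogeneous_on W m (\<lambda>q. f q * g q)"
  unfolding homogeneous_on_def by (simp add: powr_add)

lemma homogeneous_on_add:
  "homogeneous_on W k f \<Longrightarrow> homogeneous_on W k g \<Longrightarrow> homogeneous_on W k (\<lambda>q. f q + g q)"
  unfolding homogeneous_on_def by (simp add: distrib_left)

lemma homogeneous_on_diff:
  "homogeneous_on W k f \<Longrightarrow> homogeneous_on W k g \<Longrightarrow> homogeneous_on W k (\<lambda>q. f q - g q)"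
  unfolding homogeneous_on_def by (simp add: right_diff_distrib)

lemma homogeneous_on_cmult: "homogeneous_on W k f \<Longrightarrow> homogeneous_on W k (\<lambda>q. a * f q)"
  unfolding homogeneous_on_def by simp

lemma homogeneous_on_sum:
  "finite I \<Longrightarrow> (\<And>i. i \<in> I \<Longrightarrow> homogeneous_on W k (f i)) \<Longrightarrow> homogeneous_on W k (\<lambda>q. \<Sum>i\<in>I. f i q)"
  unfolding homogeneous_on_def by (simp add: sum_distrib_left)

lemma homogeneous_on_snd_nth: "homogeneous_on W 1 (\<lambda>p. snd p $ l)"
  unfolding homogeneous_on_def by simp

lemma homogeneous_on_Dx:
  fixes f :: "('n::finite) pt \<Rightarrow> real"
  assumes W: "open W" and h: "homogeneous_on W k f"
    and d: "\<And>q. q \<in> W \<Longrightarrow> f differentiable (at q)"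
  shows "homogeneous_on W k (Dx j f)"
  unfolding homogeneous_on_def
proof (intro allI impI)
  fix x y and c :: real assume p: "(x, y) \<in> W" and c: "c > 0"
  let ?v = "cvec (Inl j) :: 'n pt"
  have ev: "eventually (\<lambda>t. f ((x, c *\<^sub>R y) + t *\<^sub>R ?v) = c powr k * f ((x, y) + t *\<^sub>R ?v)) (nhds 0)"
    using eventually_line_in_open[OF W p, of ?v]
  proof (rule eventually_mono)
    fix t :: real assume "(x, y) + t *\<^sub>R ?v \<in> W"
    then have "(x + t *\<^sub>R axis j 1, y) \<in> W" by (simp add: cvec_def)
    from homogeneous_onD[OF h this c] show "f ((x, c *\<^sub>R y) + t *\<^sub>R ?v) = c powr k * f ((x, y) + t *\<^sub>R ?v)"
      by (simp add: cvec_def)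
  qed
  have "DERIV (\<lambda>t. c powr k * f ((x, y) + t *\<^sub>R ?v)) 0 :> c powr k * dirD f ?v (x, y)"
    by (intro DERIV_cmult has_real_derivative_dirD d p)
  then have "deriv (\<lambda>t. f ((x, c *\<^sub>R y) + t *\<^sub>R ?v)) 0 = c powr k * dirD f ?v (x, y)"
    using DERIV_cong_ev[OF refl ev refl] DERIV_imp_deriv by blast
  then show "Dx j f (x, c *\<^sub>R y) = c powr k * Dx j f (x, y)"
    unfolding pd_def dirD_def[of f ?v "(x, c *\<^sub>R y)"] by simp
qed

text \<open>Along the line through \<open>(x, c y)\<close> in direction \<open>\<partial>/\<partial>y\<^sup>j\<close>, \<open>f\<close> is \<open>c\<^sup>k\<close> times
  \<open>f\<close> along the line through \<open>(x, y)\<close> traversed at speed \<open>1/c\<close>.\<close>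

lemma homogeneous_on_Dy:
  fixes f :: "('n::finite) pt \<Rightarrow> real"
  assumes W: "open W" and h: "homogeneous_on W k f"
    and d: "\<And>q. q \<in> W \<Longrightarrow> f differentiable (at q)"
  shows "homogeneous_on W (k - 1) (Dy j f)"
  unfolding homogeneous_on_def
proof (intro allI impI)
  fix x y and c :: real assume p: "(x, y) \<in> W" and c: "c > 0"
  let ?v = "cvec (Inr j) :: 'n pt"
  let ?w = "(1 / c) *\<^sub>R ?v"
  have ev: "eventually (\<lambda>t. f ((x, c *\<^sub>R y) + t *\<^sub>R ?v) = c powr k * f ((x, y) + t *\<^sub>R ?w)) (nhds 0)"
    using eventually_line_in_open[OF W p, of ?w]
  proof (rule eventually_mono)
    fix t :: real assume "(x, y) + t *\<^sub>R ?w \<in> W"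
    then have m: "(x, y + (t / c) *\<^sub>R axis j 1) \<in> W" by (simp add: cvec_def)
    have "(x, c *\<^sub>R y) + t *\<^sub>R ?v = (x, c *\<^sub>R (y + (t / c) *\<^sub>R axis j 1))"
      using c by (simp add: cvec_def scaleR_add_right)
    moreover have "(x, y) + t *\<^sub>R ?w = (x, y + (t / c) *\<^sub>R axis j 1)"
      by (simp add: cvec_def)
    ultimately show "f ((x, c *\<^sub>R y) + t *\<^sub>R ?v) = c powr k * f ((x, y) + t *\<^sub>R ?w)"
      using homogeneous_onD[OF h m c] by simp
  qed
  have dp: "f differentiable (at (x, y))" using d p by blast
  have "dirD f ?w (x, y) = (1 / c) * dirD f ?v (x, y)"
    unfolding dirD_eq_frechet_derivative[OF dp]
    using frechet_derivative_works[of f "at (x, y)"] dp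
    by (simp add: has_derivative_bounded_linear[THEN bounded_linear.linear, THEN linear_cmul])
  moreover have "DERIV (\<lambda>t. c powr k * f ((x, y) + t *\<^sub>R ?w)) 0 :> c powr k * dirD f ?w (x, y)"
    by (intro DERIV_cmult has_real_derivative_dirD dp)
  ultimately have "DERIV (\<lambda>t. c powr k * f ((x, y) + t *\<^sub>R ?w)) 0 :> c powr (k - 1) * dirD f ?v (x, y)"
    using c by (simp add: powr_diff)
  then have "deriv (\<lambda>t. f ((x, c *\<^sub>R y) + t *\<^sub>R ?v)) 0 = c powr (k - 1) * dirD f ?v (x, y)"
    using DERIV_cong_ev[OF refl ev refl] DERIV_imp_deriv by blast
  then show "Dy j f (x, c *\<^sub>R y) = c powr (k - 1) * Dy j f (x, y)"
    unfolding pd_def dirD_def[of f ?v "(x, c *\<^sub>R y)"] by simp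
qed

lemma homogeneous_on_Euler:
  fixes f :: "('n::finite) pt \<Rightarrow> real"
  assumes h: "homogeneous_on W k f" and p: "p \<in> W" and d: "f differentiable (at p)"
  shows "(\<Sum>j\<in>UNIV. snd p $ j * Dy j f p) = k * f p"
proof -
  obtain x y where xy: "p = (x, y)" by (cases p)
  have "eventually (\<lambda>t::real. t > -1) (nhds 0)"
    unfolding eventually_nhds_metric dist_real_def by (intro exI[of _ 1]) auto
  then have ev: "eventually (\<lambda>t. f (p + t *\<^sub>R (0, y)) = (1 + t) powr k * f p) (nhds 0)"
  proof (rule eventually_mono)
    fix t :: real assume t: "t > -1"
    have "p + t *\<^sub>R (0, y) = (x, (1 + t) *\<^sub>R y)" unfolding xy by (simp add: algebra_simps)
    then show "f (p + t *\<^sub>R (0, y)) = (1 + t) powr k * f p"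
      using homogeneous_onD[OF h p[unfolded xy], of "1 + t"] t xy by simp
  qed
  have "DERIV (\<lambda>t. (1 + t) powr k * f p) 0 :> k * f p"
    by (auto intro!: derivative_eq_intros)
  then have "dirD f (0, y) p = k * f p"
    unfolding dirD_def using DERIV_cong_ev[OF refl ev refl] DERIV_imp_deriv by blast
  then show ?thesis using dirD_vertical[OF d, of y] xy by simp
qed

locale finsler_chart =
  fixes U :: "(real^'n::finite) set" and F :: "('n::finite) pt \<Rightarrow> real" and \<sigma> :: "real^'n \<Rightarrow> real"
  assumes finsler: "finsler_on U F" and smooth_\<sigma>: "smooth_on U \<sigma>" and \<sigma>_nonzero: "\<forall>x\<in>U. \<sigma> x \<noteq> 0"
begin

abbreviation "TU \<equiv> T0 U"
abbreviation "Fsq \<equiv> (\<lambda>q. (F q)^2)"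
abbreviation "S \<equiv> Scurv F \<sigma>"
abbreviation "\<tau> \<equiv> distortion F \<sigma>"

lemma open_U: "open U" using finsler by (simp add: finsler_on_def)

lemma open_TU: "open TU"
  unfolding T0_def using open_U by (intro open_Times) auto

lemma mem_TU: "(x, y) \<in> TU \<longleftrightarrow> x \<in> U \<and> y \<noteq> 0" by (simp add: T0_def)

lemma smooth_F: "smooth_on TU F" using finsler by (simp add: finsler_on_def)

lemma det_gmat_nonzero: "p \<in> TU \<Longrightarrow> det (gmat F p) \<noteq> 0"
  using finsler by (simp add: finsler_on_def)

lemma differentiable_TU: "smooth_on TU f \<Longrightarrow> p \<in> TU \<Longrightarrow> f differentiable (at p)"
  by (rule smooth_on_imp_differentiable)

lemma pd_commute: "smooth_on TU f \<Longrightarrow> p \<in> TU \<Longrightarrow> pd A (pd B f) p = pd B (pd A f) p"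
  unfolding pd_def by (rule smooth_on_dirD_commute[OF open_TU])

lemma smooth_Fsq: "smooth_on TU Fsq"
  unfolding power2_eq_square by (intro smooth_on_mult open_TU smooth_F)

lemma fund_g_eq: "fund_g F i j = (\<lambda>p. 1/2 * Dy i (Dy j Fsq) p)"
  by (simp add: fund_g_def fun_eq_iff)

lemma smooth_fund_g: "smooth_on TU (fund_g F i j)"
  unfolding fund_g_eq by (intro smooth_on_cmult open_TU smooth_on_pd smooth_Fsq)

lemma smooth_gmat: "smooth_on TU (\<lambda>q. gmat F q $ i $ j)"
  unfolding gmat_def using smooth_fund_g by simp

lemma smooth_det_gmat: "smooth_on TU (\<lambda>p. det (gmat F p))"
  by (intro smooth_on_det open_TU smooth_gmat)

lemma fund_g_symmetric: "p \<in> TU \<Longrightarrow> fund_g F i j p = fund_g F j i p"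
  unfolding fund_g_def using pd_commute[OF smooth_Fsq] by simp

lemma ginv_symmetric: "p \<in> TU \<Longrightarrow> ginv F i j p = ginv F j i p"
proof -
  assume p: "p \<in> TU"
  then have "transpose (gmat F p) = gmat F p"
    by (simp add: transpose_def gmat_def vec_eq_iff fund_g_symmetric)
  then show ?thesis unfolding ginv_def using matrix_inv_symmetric det_gmat_nonzero[OF p] by blast
qed

lemma fund_g_ginv: "p \<in> TU \<Longrightarrow> (\<Sum>k\<in>UNIV. fund_g F i k p * ginv F k j p) = (if i = j then 1 else 0)"
  using matrix_mul_matrix_inv(1)[OF det_gmat_nonzero, of p]
  by (simp add: ginv_def gmat_def matrix_matrix_mult_def mat_def vec_eq_iff)

lemma ginv_fund_g: "p \<in> TU \<Longrightarrow> (\<Sum>k\<in>UNIV. ginv F i k p * fund_g F k j p) = (if i = j then 1 else 0)"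
  using matrix_mul_matrix_inv(2)[OF det_gmat_nonzero, of p]
  by (simp add: ginv_def gmat_def matrix_matrix_mult_def mat_def vec_eq_iff)

lemma smooth_ginv: "smooth_on TU (ginv F i j)"
proof (rule smooth_on_cong[OF open_TU])
  show "smooth_on TU (\<lambda>p. det (\<chi> r c. if c = i then axis j 1 $ r else gmat F p $ r $ c) * (1 / det (gmat F p)))"
  proof (intro smooth_on_mult open_TU smooth_on_det smooth_on_inverse smooth_det_gmat det_gmat_nonzero)
    fix r c
    show "smooth_on TU (\<lambda>q. (\<chi> r c. if c = i then axis j 1 $ r else gmat F q $ r $ c) $ r $ c)"
      by (cases "c = i") (simp_all add: smooth_gmat)
  qed (auto simp: smooth_gmat)
  show "det (\<chi> r c. if c = i then axis j 1 $ r else gmat F q $ r $ c) * (1 / det (gmat F q)) = ginv F i j q"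
    if "q \<in> TU" for q
    unfolding ginv_def using matrix_inv_cramer[OF det_gmat_nonzero[OF that], of i j] by simp
qed

lemma spray_eq: "spray F k = (\<lambda>p. 1/4 * (\<Sum>j\<in>UNIV. ginv F k j p *
      ((\<Sum>l\<in>UNIV. Dy j (Dx l Fsq) p * (snd p $ l)) - Dx j Fsq p)))"
  by (simp add: spray_def fun_eq_iff)

lemma smooth_spray: "smooth_on TU (spray F k)"
  unfolding spray_eq
  by (intro smooth_on_cmult smooth_on_sum smooth_on_mult smooth_on_diff open_TU smooth_ginv
      smooth_on_pd smooth_Fsq smooth_on_snd_nth) auto

lemma Gop_eq: "Gop F f = (\<lambda>p. (\<Sum>l\<in>UNIV. snd p $ l * Dx l f p) + (\<Sum>k\<in>UNIV. (- 2 * spray F k p) * Dy k f p))"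
  unfolding Gop_def[abs_def] sum_UNIV_Plus by (simp add: Gvec_def)

lemma smooth_Gvec: "smooth_on TU (Gvec F A)"
proof (cases A)
  case (Inl i)
  then show ?thesis using smooth_on_snd_nth by (simp add: Gvec_def[abs_def])
next
  case (Inr i)
  then show ?thesis using smooth_on_cmult[OF open_TU smooth_spray[of i], of "-2"]
    by (simp add: Gvec_def[abs_def])
qed

lemma smooth_Gop: "smooth_on TU f \<Longrightarrow> smooth_on TU (Gop F f)"
  unfolding Gop_def[abs_def] by (intro smooth_on_sum smooth_on_mult open_TU smooth_Gvec smooth_on_pd) auto

definition lndet_g :: "'n pt \<Rightarrow> real" where
  "lndet_g p = ln \<bar>det (gmat F p)\<bar>"

definition ln_\<sigma> :: "'n pt \<Rightarrow> real" where
  "ln_\<sigma> p = ln \<bar>\<sigma> (fst p)\<bar>"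

lemma smooth_lndet_g: "smooth_on TU lndet_g"
  unfolding lndet_g_def[abs_def] by (intro smooth_on_ln_abs open_TU smooth_det_gmat det_gmat_nonzero)

lemma smooth_ln_\<sigma>: "smooth_on TU ln_\<sigma>"
proof -
  have "smooth_on U (\<lambda>x. ln \<bar>\<sigma> x\<bar>)"
    using \<sigma>_nonzero by (intro smooth_on_ln_abs open_U smooth_\<sigma>) auto
  then show ?thesis unfolding ln_\<sigma>_def[abs_def] T0_def by (rule smooth_on_fst)
qed

lemma distortion_eq: "p \<in> TU \<Longrightarrow> \<tau> p = 1/2 * lndet_g p - 1/2 * ln_\<sigma> p"
proof -
  assume p: "p \<in> TU"
  then have "\<sigma> (fst p) \<noteq> 0" using \<sigma>_nonzero by (cases p) (simp add: mem_TU)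
  then show ?thesis using det_gmat_nonzero[OF p]
    by (simp add: distortion_def lndet_g_def ln_\<sigma>_def ln_divide_pos algebra_simps)
qed

lemma smooth_distortion: "smooth_on TU \<tau>"
  by (rule smooth_on_cong[OF open_TU, of "\<lambda>p. 1/2 * lndet_g p - 1/2 * ln_\<sigma> p"])
     (auto simp only: distortion_eq intro!: smooth_on_diff smooth_on_cmult open_TU smooth_lndet_g smooth_ln_\<sigma>)

lemma smooth_Scurv: "smooth_on TU S"
  unfolding Scurv_def by (intro smooth_Gop smooth_distortion)

lemma homogeneous_Dx: "homogeneous_on TU k f \<Longrightarrow> smooth_on TU f \<Longrightarrow> homogeneous_on TU k (Dx j f)"
  using homogeneous_on_Dx[OF open_TU] differentiable_TU by blast

lemma homogeneous_Dy:
  "homogeneous_on TU k f \<Longrightarrow> smooth_on TU f \<Longrightarrow> k' = k - 1 \<Longrightarrow> homogeneous_on TU k' (Dy j f)"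
  using homogeneous_on_Dy[OF open_TU] differentiable_TU by blast

lemma homogeneous_Fsq: "homogeneous_on TU 2 Fsq"
  unfolding homogeneous_on_def
proof (intro allI impI)
  fix x y and c :: real assume "(x, y) \<in> TU" "c > 0"
  then have "F (x, c *\<^sub>R y) = c * F (x, y)" using finsler by (simp add: finsler_on_def mem_TU)
  then show "(F (x, c *\<^sub>R y))\<^sup>2 = c powr 2 * (F (x, y))\<^sup>2"
    using \<open>c > 0\<close> by (simp add: power_mult_distrib)
qed

lemma gmat_scale:
  assumes "(x, y) \<in> TU" "c > 0"
  shows "gmat F (x, c *\<^sub>R y) = gmat F (x, y)"
proof -
  have hg: "homogeneous_on TU 0 (fund_g F i j)" for i j
    unfolding fund_g_eq
    by (intro homogeneous_on_cmult homogeneous_Dy[OF homogeneous_Dy[OF homogeneous_Fsq smooth_Fsq refl]]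
        smooth_on_pd smooth_Fsq) simp
  show ?thesis using homogeneous_onD[OF hg assms] assms(2) by (simp add: gmat_def vec_eq_iff)
qed

lemma homogeneous_spray: "homogeneous_on TU 2 (spray F k)"
  unfolding spray_eq
proof (intro homogeneous_on_cmult homogeneous_on_sum finite_UNIV)
  fix j
  have h1: "homogeneous_on TU 0 (ginv F k j)"
    unfolding homogeneous_on_def ginv_def using gmat_scale by simp
  have h2: "homogeneous_on TU 2 (\<lambda>p. \<Sum>l\<in>UNIV. Dy j (Dx l Fsq) p * (snd p $ l))"
    by (intro homogeneous_on_sum homogeneous_on_mult[OF _ homogeneous_on_snd_nth]
        homogeneous_Dy[OF homogeneous_Dx[OF homogeneous_Fsq smooth_Fsq] smooth_on_pd[OF smooth_Fsq]]) auto
  have h3: "homogeneous_on TU 2 (Dx j Fsq)" by (rule homogeneous_Dx[OF homogeneous_Fsq smooth_Fsq])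
  show "homogeneous_on TU 2
      (\<lambda>p. ginv F k j p * ((\<Sum>l\<in>UNIV. Dy j (Dx l Fsq) p * (snd p $ l)) - Dx j Fsq p))"
    by (rule homogeneous_on_mult[OF h1 homogeneous_on_diff[OF h2 h3]]) simp
qed simp

lemma homogeneous_Scurv: "homogeneous_on TU 1 S"
proof -
  have \<tau>: "homogeneous_on TU 0 \<tau>"
    unfolding homogeneous_on_def distortion_def using gmat_scale by simp
  show ?thesis
    unfolding Scurv_def Gop_eq
    by (intro homogeneous_on_add homogeneous_on_sum finite_UNIV
        homogeneous_on_mult[OF homogeneous_on_snd_nth homogeneous_Dx[OF \<tau> smooth_distortion]]
        homogeneous_on_mult[OF homogeneous_on_cmult[OF homogeneous_spray] homogeneous_Dy[OF \<tau> smooth_distortion refl]])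
       simp_all
qed

lemma Euler_spray: "p \<in> TU \<Longrightarrow> (\<Sum>j\<in>UNIV. snd p $ j * Dy j (spray F m) p) = 2 * spray F m p"
  using homogeneous_on_Euler[OF homogeneous_spray] differentiable_TU[OF smooth_spray] by simp

lemma Euler_Scurv: "p \<in> TU \<Longrightarrow> (\<Sum>j\<in>UNIV. snd p $ j * Dy j S p) = S p"
  using homogeneous_on_Euler[OF homogeneous_Scurv] differentiable_TU[OF smooth_Scurv] by simp

lemma Euler_Dy_Scurv: "p \<in> TU \<Longrightarrow> (\<Sum>j\<in>UNIV. snd p $ j * Dy j (Dy m S) p) = 0"
  using homogeneous_on_Euler[OF homogeneous_Dy[OF homogeneous_Scurv smooth_Scurv refl]]
    differentiable_TU[OF smooth_on_pd[OF smooth_Scurv]]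
  by simp

section \<open>The S-curvature\<close>

definition spray_lower :: "'n \<Rightarrow> 'n pt \<Rightarrow> real" where
  "spray_lower j p = (\<Sum>l\<in>UNIV. Dy j (Dx l Fsq) p * snd p $ l) - Dx j Fsq p"

lemma smooth_spray_lower: "smooth_on TU (spray_lower j)"
  unfolding spray_lower_def[abs_def]
  by (intro smooth_on_sum smooth_on_mult smooth_on_diff open_TU smooth_on_pd smooth_Fsq smooth_on_snd_nth) auto

lemma fund_g_spray: "q \<in> TU \<Longrightarrow> (\<Sum>k\<in>UNIV. fund_g F i k q * spray F k q) = 1/4 * spray_lower i q"
proof -
  assume q: "q \<in> TU"
  have "(\<Sum>k\<in>UNIV. fund_g F i k q * spray F k q)
      = (\<Sum>k\<in>UNIV. \<Sum>j\<in>UNIV. 1/4 * (fund_g F i k q * ginv F k j q * spray_lower j q))"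
    unfolding spray_def spray_lower_def sum_distrib_left by (intro sum.cong refl) (simp add: ac_simps)
  also have "\<dots> = (\<Sum>j\<in>UNIV. 1/4 * ((\<Sum>k\<in>UNIV. fund_g F i k q * ginv F k j q) * spray_lower j q))"
    by (subst sum.swap) (simp only: sum_distrib_left sum_distrib_right)
  also have "\<dots> = 1/4 * spray_lower i q"
    using fund_g_ginv[OF q] by (simp add: mult_if_delta flip: sum_divide_distrib)
  finally show ?thesis .
qed

lemma Dy_fund_g_spray:
  assumes p: "p \<in> TU"
  shows "(\<Sum>k\<in>UNIV. fund_g F i k p * Dy m (spray F k) p)
    = 1/4 * Dy m (spray_lower i) p - (\<Sum>k\<in>UNIV. Dy m (fund_g F i k) p * spray F k p)"
proof -
  have "Dy m (\<lambda>q. \<Sum>k\<in>UNIV. fund_g F i k q * spray F k q) p = Dy m (\<lambda>q. 1/4 * spray_lower i q) p"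
    using fund_g_spray by (intro pd_cong_open[OF open_TU p]) auto
  moreover have "Dy m (\<lambda>q. \<Sum>k\<in>UNIV. fund_g F i k q * spray F k q) p =
      (\<Sum>k\<in>UNIV. fund_g F i k p * Dy m (spray F k) p + Dy m (fund_g F i k) p * spray F k p)"
    using p by (simp add: pd_sum pd_mult differentiable_TU smooth_fund_g smooth_spray differentiable_mult)
  moreover have "Dy m (\<lambda>q. 1/4 * spray_lower i q) p = 1/4 * Dy m (spray_lower i) p"
    by (rule pd_cmult[OF differentiable_TU[OF smooth_spray_lower p]])
  ultimately show ?thesis by (simp add: sum.distrib algebra_simps)
qed

lemma pd_fund_g: "p \<in> TU \<Longrightarrow> pd A (fund_g F i j) p = 1/2 * pd A (Dy i (Dy j Fsq)) p"
  unfolding fund_g_eq by (intro pd_cmult differentiable_TU smooth_on_pd smooth_Fsq)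

lemma Dy_fund_g_symmetric:
  assumes p: "p \<in> TU"
  shows "Dy k (fund_g F i j) p = Dy i (fund_g F k j) p" "Dy k (fund_g F i j) p = Dy k (fund_g F j i) p"
proof -
  show "Dy k (fund_g F i j) p = Dy i (fund_g F k j) p"
    unfolding pd_fund_g[OF p] by (rule arg_cong[OF pd_commute[OF smooth_on_pd[OF smooth_Fsq] p]])
  show "Dy k (fund_g F i j) p = Dy k (fund_g F j i) p"
    unfolding pd_fund_g[OF p] using pd_cong_open[OF open_TU p, of "Dy i (Dy j Fsq)" "Dy j (Dy i Fsq)"] pd_commute[OF smooth_Fsq]
    by simp
qed

lemma Dy_spray_lower:
  assumes p: "p \<in> TU"
  shows "Dy m (spray_lower i) p
    = 2 * (\<Sum>l\<in>UNIV. snd p $ l * Dx l (fund_g F m i) p) + (Dy i (Dx m Fsq) p - Dy m (Dx i Fsq) p)"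
proof -
  have d: "(\<lambda>q. Dy i (Dx l Fsq) q * snd q $ l) differentiable (at p)" for l
    using p by (intro differentiable_mult differentiable_TU smooth_on_pd smooth_Fsq smooth_on_snd_nth)
  have "Dy m (Dy i (Dx l Fsq)) p = 2 * Dx l (fund_g F m i) p" for l
  proof -
    have "Dy m (Dy i (Dx l Fsq)) p = Dy m (Dx l (Dy i Fsq)) p"
      by (rule pd_cong_open[OF open_TU p]) (auto intro: pd_commute[OF smooth_Fsq])
    also have "\<dots> = Dx l (Dy m (Dy i Fsq)) p"
      by (rule pd_commute[OF smooth_on_pd[OF smooth_Fsq] p])
    finally show ?thesis unfolding pd_fund_g[OF p] by simp
  qed
  moreover have "Dy m (spray_lower i) p
      = (\<Sum>l\<in>UNIV. Dy m (\<lambda>q. Dy i (Dx l Fsq) q * snd q $ l) p) - Dy m (Dx i Fsq) p"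
    unfolding spray_lower_def[abs_def] using p d
    by (simp add: pd_diff pd_sum differentiable_TU smooth_on_pd smooth_Fsq differentiable_sum)
  moreover have "Dy m (\<lambda>q. Dy i (Dx l Fsq) q * snd q $ l) p
      = Dy i (Dx l Fsq) p * (if l = m then 1 else 0) + Dy m (Dy i (Dx l Fsq)) p * snd p $ l" for l
    using p by (simp add: pd_mult differentiable_TU smooth_on_pd smooth_Fsq smooth_on_snd_nth)
  ultimately show ?thesis
    by (simp add: sum.distrib if_delta_mult mult_if_delta sum_distrib_left algebra_simps)
qed

lemma pd_lndet_g:
  "p \<in> TU \<Longrightarrow> pd A lndet_g p = (\<Sum>i\<in>UNIV. \<Sum>j\<in>UNIV. pd A (fund_g F i j) p * ginv F j i p)"
  using dirD_ln_abs_det[of "gmat F" p "cvec A"] differentiable_TU[OF smooth_gmat] det_gmat_nonzero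
  by (simp add: pd_def lndet_g_def[abs_def] gmat_def ginv_def)

lemma Gop_lndet_g_expand:
  assumes p: "p \<in> TU"
  shows "Gop F lndet_g p = (\<Sum>i\<in>UNIV. \<Sum>j\<in>UNIV. ginv F i j p *
     ((\<Sum>l\<in>UNIV. snd p $ l * Dx l (fund_g F i j) p) - 2 * (\<Sum>k\<in>UNIV. Dy i (fund_g F j k) p * spray F k p)))"
proof -
  have summand: "(\<Sum>l\<in>UNIV. snd p $ l * (Dx l (fund_g F i j) p * ginv F j i p))
      + (\<Sum>k\<in>UNIV. (- 2 * spray F k p) * (Dy k (fund_g F i j) p * ginv F j i p))
    = ginv F i j p * ((\<Sum>l\<in>UNIV. snd p $ l * Dx l (fund_g F i j) p)
        - 2 * (\<Sum>k\<in>UNIV. Dy i (fund_g F j k) p * spray F k p))" for i j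
  proof -
    have "Dy i (fund_g F j k) p = Dy k (fund_g F i j) p" for k
      using Dy_fund_g_symmetric[OF p] by metis
    then show ?thesis using ginv_symmetric[OF p, of j i]
      by (simp add: sum_distrib_left sum_distrib_right right_diff_distrib sum_negf algebra_simps)
  qed
  have "Gop F lndet_g p
      = (\<Sum>i\<in>UNIV. \<Sum>j\<in>UNIV. \<Sum>l\<in>UNIV. snd p $ l * (Dx l (fund_g F i j) p * ginv F j i p))
      + (\<Sum>i\<in>UNIV. \<Sum>j\<in>UNIV. \<Sum>k\<in>UNIV. (- 2 * spray F k p) * (Dy k (fund_g F i j) p * ginv F j i p))"
    unfolding Gop_eq pd_lndet_g[OF p] by (simp only: sum_mult_sum_sum_swap)
  also have "\<dots> = (\<Sum>i\<in>UNIV. \<Sum>j\<in>UNIV. ginv F i j p *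
     ((\<Sum>l\<in>UNIV. snd p $ l * Dx l (fund_g F i j) p) - 2 * (\<Sum>k\<in>UNIV. Dy i (fund_g F j k) p * spray F k p)))"
    unfolding summand[symmetric] by (simp only: sum.distrib)
  finally show ?thesis .
qed

lemma sum_Dy_spray_expand:
  assumes p: "p \<in> TU"
  shows "(\<Sum>m\<in>UNIV. Dy m (spray F m) p) = (\<Sum>m\<in>UNIV. \<Sum>i\<in>UNIV. ginv F m i p *
     (1/4 * Dy m (spray_lower i) p - (\<Sum>k\<in>UNIV. Dy m (fund_g F i k) p * spray F k p)))"
proof -
  have "(\<Sum>m\<in>UNIV. Dy m (spray F m) p)
      = (\<Sum>m\<in>UNIV. \<Sum>k\<in>UNIV. (if m = k then 1 else 0) * Dy m (spray F k) p)"
    by (simp add: mult_if_delta)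
  also have "\<dots> = (\<Sum>m\<in>UNIV. \<Sum>k\<in>UNIV. (\<Sum>i\<in>UNIV. ginv F m i p * fund_g F i k p) * Dy m (spray F k) p)"
    by (simp only: ginv_fund_g[OF p])
  also have "\<dots> = (\<Sum>m\<in>UNIV. \<Sum>i\<in>UNIV. ginv F m i p * (\<Sum>k\<in>UNIV. fund_g F i k p * Dy m (spray F k) p))"
    by (simp only: sum_sum_mult_swap)
  finally show ?thesis by (simp only: Dy_fund_g_spray[OF p])
qed

text \<open>The antisymmetric part of \<open>\<partial>spray_lower\<^sub>i/\<partial>y\<^sup>m\<close> drops out against the
  symmetric \<open>g\<^sup>m\<^sup>i\<close>.\<close>

lemma Gop_lndet_g:
  assumes p: "p \<in> TU"
  shows "Gop F lndet_g p = 2 * (\<Sum>m\<in>UNIV. Dy m (spray F m) p)"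
proof -
  define \<omega> where "\<omega> m i = Dy i (Dx m Fsq) p - Dy m (Dx i Fsq) p" for m i
  have "(\<Sum>m\<in>UNIV. \<Sum>i\<in>UNIV. ginv F m i p * \<omega> m i) = 0"
    by (rule sum_symmetric_antisymmetric) (auto simp: \<omega>_def ginv_symmetric[OF p])
  moreover have "2 * (\<Sum>m\<in>UNIV. Dy m (spray F m) p)
      = Gop F lndet_g p + 1/2 * (\<Sum>m\<in>UNIV. \<Sum>i\<in>UNIV. ginv F m i p * \<omega> m i)"
    unfolding sum_Dy_spray_expand[OF p] Gop_lndet_g_expand[OF p] Dy_spray_lower[OF p] \<omega>_def
    by (simp add: sum_distrib_left sum.distrib sum_subtractf algebra_simps)
  ultimately show ?thesis by simp
qed

lemma Dy_ln_\<sigma>: "Dy a ln_\<sigma> = (\<lambda>_. 0)"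
  unfolding ln_\<sigma>_def[abs_def] by (rule Dy_fst)

lemma Dy_Dx_ln_\<sigma>: "Dy a (Dx b ln_\<sigma>) = (\<lambda>_. 0)"
  unfolding ln_\<sigma>_def[abs_def] Dx_fst[of b "\<lambda>x. ln \<bar>\<sigma> x\<bar>"] by (rule Dy_fst)

lemma Scurv_eq:
  assumes q: "q \<in> TU"
  shows "S q = (\<Sum>m\<in>UNIV. Dy m (spray F m) q) - 1/2 * (\<Sum>l\<in>UNIV. snd q $ l * Dx l ln_\<sigma> q)"
proof -
  have pd_\<tau>: "pd A \<tau> q = 1/2 * pd A lndet_g q - 1/2 * pd A ln_\<sigma> q" for A
  proof -
    have "pd A \<tau> q = pd A (\<lambda>q. 1/2 * lndet_g q - 1/2 * ln_\<sigma> q) q"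
      by (rule pd_cong_open[OF open_TU q]) (rule distortion_eq)
    also have "\<dots> = 1/2 * pd A lndet_g q - 1/2 * pd A ln_\<sigma> q"
      using q by (simp add: pd_diff pd_divide differentiable_TU smooth_lndet_g smooth_ln_\<sigma>)
    finally show ?thesis .
  qed
  have "S q = 1/2 * Gop F lndet_g q - 1/2 * Gop F ln_\<sigma> q"
    unfolding Scurv_def Gop_eq pd_\<tau> by (simp add: sum_subtractf sum_distrib_left sum_negf algebra_simps)
  also have "Gop F ln_\<sigma> q = (\<Sum>l\<in>UNIV. snd q $ l * Dx l ln_\<sigma> q)"
    unfolding Gop_eq Dy_ln_\<sigma> by simp
  finally show ?thesis unfolding Gop_lndet_g[OF q] by simp
qed

lemma Dy_Scurv:
  assumes q: "q \<in> TU"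
  shows "Dy b S q = (\<Sum>m\<in>UNIV. Dy b (Dy m (spray F m)) q) - 1/2 * Dx b ln_\<sigma> q"
proof -
  have d: "(\<lambda>q. snd q $ l * Dx l ln_\<sigma> q) differentiable (at q)" for l
    by (intro differentiable_mult differentiable_TU[OF _ q] smooth_on_snd_nth smooth_on_pd smooth_ln_\<sigma>)
  have "Dy b S q
      = Dy b (\<lambda>q. (\<Sum>m\<in>UNIV. Dy m (spray F m) q) - 1/2 * (\<Sum>l\<in>UNIV. snd q $ l * Dx l ln_\<sigma> q)) q"
    by (rule pd_cong_open[OF open_TU q]) (rule Scurv_eq)
  also have "\<dots> = (\<Sum>m\<in>UNIV. Dy b (Dy m (spray F m)) q)
      - 1/2 * (\<Sum>l\<in>UNIV. Dy b (\<lambda>q. snd q $ l * Dx l ln_\<sigma> q) q)"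
    using q d
    by (simp add: pd_diff pd_divide pd_sum differentiable_sum differentiable_TU smooth_on_pd smooth_spray)
  also have "(\<Sum>l\<in>UNIV. Dy b (\<lambda>q. snd q $ l * Dx l ln_\<sigma> q) q) = Dx b ln_\<sigma> q"
    using q by (simp add: pd_mult Dy_Dx_ln_\<sigma> differentiable_TU smooth_on_snd_nth smooth_on_pd smooth_ln_\<sigma>
        mult_if_delta)
  finally show ?thesis .
qed

lemma Dy_Dy_Scurv:
  assumes p: "p \<in> TU"
  shows "Dy a (Dy b S) p = 2 * meanB F a b p"
proof -
  have "Dy a (Dy b S) p = Dy a (\<lambda>q. (\<Sum>m\<in>UNIV. Dy b (Dy m (spray F m)) q) - 1/2 * Dx b ln_\<sigma> q) p"
    by (rule pd_cong_open[OF open_TU p]) (rule Dy_Scurv)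
  also have "\<dots> = (\<Sum>m\<in>UNIV. Dy a (Dy b (Dy m (spray F m))) p) - 1/2 * Dy a (Dx b ln_\<sigma>) p"
    using p
    by (simp add: pd_diff pd_divide pd_sum differentiable_sum differentiable_TU smooth_on_pd smooth_spray
        smooth_ln_\<sigma>)
  finally show ?thesis unfolding Dy_Dx_ln_\<sigma> meanB_def by simp
qed

end

section \<open>The horizontal differential of \<open>d\<^sub>J\<close>\<close>

definition hor_deriv :: "('n::finite pt \<Rightarrow> real) \<Rightarrow> 'n \<Rightarrow> ('n pt \<Rightarrow> real) \<Rightarrow> 'n pt \<Rightarrow> real" where
  "hor_deriv F k f p = Dx k f p - (\<Sum>j\<in>UNIV. nlc F j k p * Dy j f p)"

lemma sum_hproj_Inl:
  "(\<Sum>C\<in>UNIV. hproj F C (Inl a) p * X C) = X (Inl a) - (\<Sum>j\<in>UNIV. nlc F j a p * X (Inr j))"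
  unfolding sum_UNIV_Plus by (simp add: hproj_def mult_if_delta sum_negf)

lemma sum_hproj_Inr: "(\<Sum>C\<in>UNIV. hproj F C (Inr a) p * X C) = 0"
  by (simp add: hproj_def)

lemma ih1_dJ: "ih1 F (dJ f) = dJ f"
proof (intro ext)
  fix A p
  show "ih1 F (dJ f) A p = dJ f A p"
    unfolding ih1_def by (cases A) (simp_all add: sum_hproj_Inl sum_hproj_Inr dJ_def)
qed

lemma ih2_eq:
  "ih2 F \<omega> A B p = (\<Sum>C\<in>UNIV. hproj F C A p * \<omega> C B p) + (\<Sum>C\<in>UNIV. hproj F C B p * \<omega> A C p)"
  unfolding ih2_def by (simp add: sum.distrib)

lemma dh_dJ:
  "dh F (dJ f) A B p = (case (A, B) of (Inl a, Inl b) \<Rightarrow> hor_deriv F a (Dy b f) p - hor_deriv F b (Dy a f) p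
                                     | _ \<Rightarrow> 0)"
  by (cases A; cases B)
     (simp_all only: dh_def ih1_dJ ih2_eq sum_hproj_Inl sum_hproj_Inr,
      simp_all add: dform1_def dJ_def hor_deriv_def sum_negf)

context finsler_chart
begin

section \<open>The \<open>\<chi>\<close>-curvature\<close>

lemma Dy_Gop:
  assumes f: "smooth_on TU f" and p: "p \<in> TU"
  shows "Dy k (Gop F f) p = Dx k f p + (\<Sum>l\<in>UNIV. snd p $ l * Dy k (Dx l f) p)
     - 2 * (\<Sum>m\<in>UNIV. nlc F m k p * Dy m f p) - 2 * (\<Sum>m\<in>UNIV. spray F m p * Dy k (Dy m f) p)"
proof -
  have d1: "(\<lambda>q. snd q $ l * Dx l f q) differentiable (at p)" for l
    by (intro differentiable_mult differentiable_TU[OF _ p] smooth_on_snd_nth smooth_on_pd f)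
  have d2: "(\<lambda>q. (- 2 * spray F m q) * Dy m f q) differentiable (at p)" for m
    by (intro differentiable_mult differentiable_TU[OF _ p] smooth_on_cmult open_TU smooth_spray smooth_on_pd f)
  have t1: "Dy k (\<lambda>q. snd q $ l * Dx l f q) p = snd p $ l * Dy k (Dx l f) p + (if l = k then Dx l f p else 0)"
    for l
    by (simp add: pd_mult differentiable_TU[OF _ p] smooth_on_snd_nth smooth_on_pd f)
  have t2: "Dy k (\<lambda>q. (- 2 * spray F m q) * Dy m f q) p
      = (- 2 * spray F m p) * Dy k (Dy m f) p - 2 * nlc F m k p * Dy m f p" for m
  proof -
    have "Dy k (\<lambda>q. (- 2 * spray F m q)) p = - 2 * nlc F m k p"
      unfolding nlc_def by (rule pd_cmult[OF differentiable_TU[OF smooth_spray p]])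
    moreover have "Dy k (\<lambda>q. (- 2 * spray F m q) * Dy m f q) p
        = (- 2 * spray F m p) * Dy k (Dy m f) p + Dy k (\<lambda>q. (- 2 * spray F m q)) p * Dy m f p"
      by (rule pd_mult[OF differentiable_TU[OF smooth_on_cmult[OF open_TU smooth_spray] p]
            differentiable_TU[OF smooth_on_pd[OF f] p]])
    ultimately show ?thesis by simp
  qed
  have "Dy k (Gop F f) p = (\<Sum>l\<in>UNIV. Dy k (\<lambda>q. snd q $ l * Dx l f q) p)
      + (\<Sum>m\<in>UNIV. Dy k (\<lambda>q. (- 2 * spray F m q) * Dy m f q) p)"
    unfolding Gop_eq using d1 d2 by (simp add: pd_add pd_sum differentiable_sum)
  also have "\<dots> = (\<Sum>l\<in>UNIV. snd p $ l * Dy k (Dx l f) p + (if l = k then Dx l f p else 0))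
      + (\<Sum>m\<in>UNIV. (- 2 * spray F m p) * Dy k (Dy m f) p - 2 * nlc F m k p * Dy m f p)"
    unfolding t1 t2 ..
  finally show ?thesis
    by (simp add: sum.distrib sum_subtractf sum_distrib_left sum_negf algebra_simps)
qed

lemma sum_y_Dx_Dy_Scurv: "p \<in> TU \<Longrightarrow> (\<Sum>j\<in>UNIV. snd p $ j * Dx i (Dy j S) p) = Dx i S p"
proof -
  assume p: "p \<in> TU"
  have "Dx i S p = Dx i (\<lambda>q. \<Sum>j\<in>UNIV. snd q $ j * Dy j S q) p"
    using Euler_Scurv by (intro pd_cong_open[OF open_TU p]) auto
  also have "\<dots> = (\<Sum>j\<in>UNIV. snd p $ j * Dx i (Dy j S) p)"
    by (simp add: pd_sum pd_mult differentiable_mult differentiable_TU[OF _ p] smooth_on_snd_nth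
        smooth_on_pd smooth_Scurv)
  finally show ?thesis by simp
qed

lemma sum_y_Dy_Dy_Scurv: "p \<in> TU \<Longrightarrow> (\<Sum>j\<in>UNIV. snd p $ j * Dy i (Dy j S) p) = 0"
  using Euler_Dy_Scurv[of p i] pd_commute[OF smooth_Scurv, of p "Inr i"] by simp

lemma chi_eq_hor_deriv:
  assumes p: "p \<in> TU"
  shows "2 * chi F \<sigma> i p = (\<Sum>j\<in>UNIV. snd p $ j * (hor_deriv F j (Dy i S) p - hor_deriv F i (Dy j S) p))"
proof -
  have N: "(\<Sum>j\<in>UNIV. snd p $ j * nlc F m j p) = 2 * spray F m p" for m
    using Euler_spray[OF p, of m] by (simp add: nlc_def)
  have "(\<Sum>j\<in>UNIV. snd p $ j * hor_deriv F j (Dy i S) p) = Gop F (Dy i S) p"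
  proof -
    have "(\<Sum>j\<in>UNIV. \<Sum>m\<in>UNIV. snd p $ j * (nlc F m j p * Dy m (Dy i S) p))
        = (\<Sum>m\<in>UNIV. (\<Sum>j\<in>UNIV. snd p $ j * nlc F m j p) * Dy m (Dy i S) p)"
      by (subst sum.swap) (simp only: sum_distrib_right mult.assoc)
    then show ?thesis
      unfolding hor_deriv_def Gop_eq N
      by (simp add: right_diff_distrib sum_subtractf sum_distrib_left sum_negf algebra_simps)
  qed
  moreover have "(\<Sum>j\<in>UNIV. snd p $ j * hor_deriv F i (Dy j S) p) = Dx i S p"
  proof -
    have "(\<Sum>j\<in>UNIV. \<Sum>m\<in>UNIV. snd p $ j * (nlc F m i p * Dy m (Dy j S) p))
        = (\<Sum>m\<in>UNIV. nlc F m i p * (\<Sum>j\<in>UNIV. snd p $ j * Dy m (Dy j S) p))"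
      by (subst sum.swap) (simp only: sum_distrib_left mult.left_commute)
    then show ?thesis
      unfolding hor_deriv_def sum_y_Dy_Dy_Scurv[OF p]
      by (simp add: right_diff_distrib sum_subtractf sum_distrib_left sum_y_Dx_Dy_Scurv[OF p])
  qed
  ultimately show ?thesis
    unfolding right_diff_distrib sum_subtractf chi_def by simp
qed

text \<open>Uses the symmetry of all mixed third derivatives of \<open>S\<close>.\<close>

lemma Dy_chi_antisym:
  assumes p: "p \<in> TU"
  shows "Dy k (chi F \<sigma> i) p - Dy i (chi F \<sigma> k) p = hor_deriv F k (Dy i S) p - hor_deriv F i (Dy k S) p"
proof -
  have Dy_chi: "Dy k (chi F \<sigma> i) p = 1/2 * (Dy k (Gop F (Dy i S)) p - Dy k (Dx i S) p)" for k i
  proof -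
    have "Dy k (chi F \<sigma> i) p = Dy k (\<lambda>q. (Gop F (Dy i S) q - Dx i S q) / 2) p"
      by (simp add: chi_def[abs_def])
    then show ?thesis
      using p by (simp add: pd_divide pd_diff differentiable_TU smooth_Gop smooth_on_pd smooth_Scurv
          differentiable_diff)
  qed
  have "Dy k (pd C (Dy i S)) p = Dy i (pd C (Dy k S)) p" for C
  proof -
    have "Dy k (pd C (Dy i S)) p = pd C (Dy k (Dy i S)) p"
      by (rule pd_commute[OF smooth_on_pd[OF smooth_Scurv] p])
    also have "\<dots> = pd C (Dy i (Dy k S)) p"
      by (rule pd_cong_open[OF open_TU p]) (rule pd_commute[OF smooth_Scurv])
    also have "\<dots> = Dy i (pd C (Dy k S)) p"
      by (rule pd_commute[OF smooth_on_pd[OF smooth_Scurv] p])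
    finally show ?thesis .
  qed
  then show ?thesis
    unfolding Dy_chi Dy_Gop[OF smooth_on_pd[OF smooth_Scurv] p] pd_commute[OF smooth_Scurv p, of "Inr _" "Inl _"]
      hor_deriv_def
    by (simp add: algebra_simps)
qed

lemma chi_zero_iff_hor_deriv_symmetric:
  "(\<forall>p\<in>TU. \<forall>i. chi F \<sigma> i p = 0) \<longleftrightarrow> (\<forall>p\<in>TU. \<forall>a b. hor_deriv F a (Dy b S) p = hor_deriv F b (Dy a S) p)"
proof
  assume chi: "\<forall>p\<in>TU. \<forall>i. chi F \<sigma> i p = 0"
  have "Dy k (chi F \<sigma> i) p = 0" if "p \<in> TU" for p k i
    using pd_cong_open[OF open_TU that, of "chi F \<sigma> i" "\<lambda>_. 0"] chi by (simp add: pd_def)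
  then show "\<forall>p\<in>TU. \<forall>a b. hor_deriv F a (Dy b S) p = hor_deriv F b (Dy a S) p"
    using Dy_chi_antisym by fastforce
next
  assume "\<forall>p\<in>TU. \<forall>a b. hor_deriv F a (Dy b S) p = hor_deriv F b (Dy a S) p"
  then show "\<forall>p\<in>TU. \<forall>i. chi F \<sigma> i p = 0"
    using chi_eq_hor_deriv by simp
qed

lemma dh_dJ_Scurv_zero_iff:
  "(\<forall>p\<in>TU. \<forall>A B. dh F (dJ S) A B p = 0) \<longleftrightarrow>
   (\<forall>p\<in>TU. \<forall>a b. hor_deriv F a (Dy b S) p = hor_deriv F b (Dy a S) p)"
  unfolding dh_dJ by (auto split: sum.split)

section \<open>The Lie derivative of \<open>\<alpha>\<close> along the spray\<close>

lemma alpha_eq: "alpha F \<sigma> A = (\<lambda>q. dJ S A q - pd A \<tau> q)"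
  by (simp add: alpha_def dform0_def fun_eq_iff)

lemma smooth_dJ_Scurv: "smooth_on TU (dJ S A)"
  by (cases A) (simp_all add: dJ_def smooth_on_pd smooth_Scurv)

lemma smooth_alpha: "smooth_on TU (alpha F \<sigma> A)"
  unfolding alpha_eq by (intro smooth_on_diff open_TU smooth_dJ_Scurv smooth_on_pd smooth_distortion)

text \<open>\<open>i\<^sub>G \<alpha> = y\<^sup>j \<partial>S/\<partial>y\<^sup>j - G(\<tau>) = S - S\<close> by Euler's theorem.\<close>

lemma Gvec_alpha: "q \<in> TU \<Longrightarrow> (\<Sum>B\<in>UNIV. Gvec F B q * alpha F \<sigma> B q) = 0"
proof -
  assume q: "q \<in> TU"
  have "(\<Sum>B\<in>UNIV. Gvec F B q * alpha F \<sigma> B q)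
      = (\<Sum>B\<in>UNIV. Gvec F B q * dJ S B q) - (\<Sum>B\<in>UNIV. Gvec F B q * pd B \<tau> q)"
    unfolding alpha_eq by (simp add: right_diff_distrib sum_subtractf)
  also have "(\<Sum>B\<in>UNIV. Gvec F B q * dJ S B q) = (\<Sum>l\<in>UNIV. snd q $ l * Dy l S q)"
    unfolding sum_UNIV_Plus by (simp add: Gvec_def dJ_def)
  also have "(\<Sum>B\<in>UNIV. Gvec F B q * pd B \<tau> q) = S q"
    by (simp add: Scurv_def Gop_def)
  finally show ?thesis using Euler_Scurv[OF q] by simp
qed

lemma pd_alpha_antisym:
  "p \<in> TU \<Longrightarrow> pd B (alpha F \<sigma> A) p - pd A (alpha F \<sigma> B) p = pd B (dJ S A) p - pd A (dJ S B) p"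
  unfolding alpha_eq
  by (simp add: pd_diff differentiable_TU smooth_dJ_Scurv smooth_on_pd smooth_distortion
      pd_commute[OF smooth_distortion])

lemma lie1_alpha:
  assumes p: "p \<in> TU"
  shows "lie1 (Gvec F) (alpha F \<sigma>) A p = (\<Sum>B\<in>UNIV. Gvec F B p * (pd B (dJ S A) p - pd A (dJ S B) p))"
proof -
  have "pd A (\<lambda>q. \<Sum>B\<in>UNIV. Gvec F B q * alpha F \<sigma> B q) p = pd A (\<lambda>_. 0) p"
    by (rule pd_cong_open[OF open_TU p]) (rule Gvec_alpha)
  then have "(\<Sum>B\<in>UNIV. alpha F \<sigma> B p * pd A (Gvec F B) p) = - (\<Sum>B\<in>UNIV. Gvec F B p * pd A (alpha F \<sigma> B) p)"
    using p
    by (simp add: pd_sum pd_mult differentiable_mult differentiable_TU smooth_Gvec smooth_alpha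
        sum.distrib eq_neg_iff_add_eq_0 mult.commute)
  then have "lie1 (Gvec F) (alpha F \<sigma>) A p
      = (\<Sum>B\<in>UNIV. Gvec F B p * (pd B (alpha F \<sigma> A) p - pd A (alpha F \<sigma> B) p))"
    unfolding lie1_def by (simp add: sum.distrib right_diff_distrib sum_subtractf)
  then show ?thesis by (simp only: pd_alpha_antisym[OF p])
qed

lemma lie1_alpha_Inl: "p \<in> TU \<Longrightarrow> lie1 (Gvec F) (alpha F \<sigma>) (Inl i) p = 2 * chi F \<sigma> i p"
  by (simp add: lie1_alpha sum_UNIV_Plus Gvec_def dJ_def chi_def Gop_eq right_diff_distrib
      sum_subtractf sum_y_Dx_Dy_Scurv)

lemma lie1_alpha_Inr: "p \<in> TU \<Longrightarrow> lie1 (Gvec F) (alpha F \<sigma>) (Inr i) p = 0"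
  by (simp add: lie1_alpha sum_UNIV_Plus Gvec_def dJ_def sum_negf sum_y_Dy_Dy_Scurv)

lemma lie1_alpha_zero_iff:
  "(\<forall>p\<in>TU. \<forall>A. lie1 (Gvec F) (alpha F \<sigma>) A p = 0) \<longleftrightarrow> (\<forall>p\<in>TU. \<forall>i. chi F \<sigma> i p = 0)"
  by (metis lie1_alpha_Inl lie1_alpha_Inr mult_eq_0_iff zero_neq_numeral sum.exhaust)

end

section \<open>The exterior derivative of \<open>\<alpha>\<close>\<close>

abbreviation mean_berwald_form :: "('n::finite pt \<Rightarrow> real) \<Rightarrow> 'n form2" where
  "mean_berwald_form F A B p \<equiv>
     2 * (\<Sum>i\<in>UNIV. \<Sum>j\<in>UNIV. meanB F i j p * wedge (deltay_form F i) (dx_form j) A B p)"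

lemma sum_dx_form: "(\<Sum>j\<in>UNIV. M j * dx_form j A p) = (case A of Inl a \<Rightarrow> M a | Inr _ \<Rightarrow> 0)"
  by (cases A) (simp_all add: dx_form_def if_delta_mult)

lemma mean_berwald_form_eq:
  "mean_berwald_form F A B p = 2 * (\<Sum>i\<in>UNIV.
     deltay_form F i A p * (case B of Inl b \<Rightarrow> meanB F i b p | Inr _ \<Rightarrow> 0)
     - deltay_form F i B p * (case A of Inl a \<Rightarrow> meanB F i a p | Inr _ \<Rightarrow> 0))"
proof -
  have "(\<Sum>j\<in>UNIV. meanB F i j p * wedge (deltay_form F i) (dx_form j) A B p)
      = deltay_form F i A p * (\<Sum>j\<in>UNIV. meanB F i j p * dx_form j B p)
        - deltay_form F i B p * (\<Sum>j\<in>UNIV. meanB F i j p * dx_form j A p)" for i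
    by (simp add: wedge_def sum_distrib_left right_diff_distrib sum_subtractf algebra_simps)
  then show ?thesis by (simp only: sum_dx_form)
qed

lemma mean_berwald_form_components:
  "mean_berwald_form F (Inl a) (Inl b) p
     = 2 * (\<Sum>i\<in>UNIV. nlc F i a p * meanB F i b p) - 2 * (\<Sum>i\<in>UNIV. nlc F i b p * meanB F i a p)"
  "mean_berwald_form F (Inl a) (Inr b) p = - 2 * meanB F b a p"
  "mean_berwald_form F (Inr a) (Inl b) p = 2 * meanB F a b p"
  "mean_berwald_form F (Inr a) (Inr b) p = 0"
  unfolding mean_berwald_form_eq
  by (simp_all add: deltay_form_def mult_if_delta sum_subtractf sum_negf)

context finsler_chart
begin

lemma dform1_alpha: "p \<in> TU \<Longrightarrow> dform1 (alpha F \<sigma>) A B p = pd A (dJ S B) p - pd B (dJ S A) p"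
  unfolding dform1_def using pd_alpha_antisym[of p A B] by simp

lemma dform1_alpha_eq_iff:
  "(\<forall>p\<in>TU. \<forall>A B. dform1 (alpha F \<sigma>) A B p = mean_berwald_form F A B p) \<longleftrightarrow>
   (\<forall>p\<in>TU. \<forall>a b. hor_deriv F a (Dy b S) p = hor_deriv F b (Dy a S) p)"
proof -
  have horizontal: "dform1 (alpha F \<sigma>) (Inl a) (Inl b) p = mean_berwald_form F (Inl a) (Inl b) p
      \<longleftrightarrow> hor_deriv F a (Dy b S) p = hor_deriv F b (Dy a S) p" if p: "p \<in> TU" for p a b
  proof -
    have "2 * (\<Sum>i\<in>UNIV. nlc F i a p * meanB F i b p) = (\<Sum>i\<in>UNIV. nlc F i a p * Dy i (Dy b S) p)"
      "2 * (\<Sum>i\<in>UNIV. nlc F i b p * meanB F i a p) = (\<Sum>i\<in>UNIV. nlc F i b p * Dy i (Dy a S) p)"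
      unfolding Dy_Dy_Scurv[OF p] sum_distrib_left by (simp_all add: ac_simps)
    then show ?thesis
      unfolding dform1_alpha[OF p] mean_berwald_form_components hor_deriv_def by (simp add: dJ_def) linarith
  qed
  have mixed: "dform1 (alpha F \<sigma>) (Inl a) (Inr b) p = mean_berwald_form F (Inl a) (Inr b) p"
    "dform1 (alpha F \<sigma>) (Inr b) (Inl a) p = mean_berwald_form F (Inr b) (Inl a) p"
    "dform1 (alpha F \<sigma>) (Inr b) (Inr b') p = mean_berwald_form F (Inr b) (Inr b') p"
    if p: "p \<in> TU" for p a b b'
    unfolding dform1_alpha[OF p] mean_berwald_form_components
    by (simp_all add: dJ_def Dy_Dy_Scurv[OF p])
  show ?thesis
  proof (intro iffI ballI allI)
    fix p a b
    assume "\<forall>p\<in>TU. \<forall>A B. dform1 (alpha F \<sigma>) A B p = mean_berwald_form F A B p" and p: "p \<in> TU"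
    then have "dform1 (alpha F \<sigma>) (Inl a) (Inl b) p = mean_berwald_form F (Inl a) (Inl b) p" by blast
    then show "hor_deriv F a (Dy b S) p = hor_deriv F b (Dy a S) p" using horizontal[OF p] by blast
  next
    fix p A B
    assume sym: "\<forall>p\<in>TU. \<forall>a b. hor_deriv F a (Dy b S) p = hor_deriv F b (Dy a S) p" and p: "p \<in> TU"
    show "dform1 (alpha F \<sigma>) A B p = mean_berwald_form F A B p"
    proof (cases A; cases B)
      fix a b assume "A = Inl a" "B = Inl b"
      then show ?thesis using horizontal[OF p, of a b] sym p by blast
    qed (use mixed[OF p] in simp_all)
  qed
qed

end

theorem lemma3p2:
  fixes F :: "(real^'n::finite) \<times> (real^'n) \<Rightarrow> real"
    and \<sigma> :: "real^'n \<Rightarrow> real"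
    and U :: "(real^'n) set"
  assumes dim: "CARD('n) \<ge> 2"
    and fins: "finsler_on U F"
    and sig_smooth: "smooth_on U \<sigma>"
    and sig_nz: "\<forall>x\<in>U. \<sigma> x \<noteq> 0"
  shows "((\<forall>p\<in>T0 U. \<forall>i. chi F \<sigma> i p = 0) \<longleftrightarrow>
            (\<forall>p\<in>T0 U. \<forall>A. lie1 (Gvec F) (alpha F \<sigma>) A p = 0))
       \<and> ((\<forall>p\<in>T0 U. \<forall>i. chi F \<sigma> i p = 0) \<longleftrightarrow>
            (\<forall>p\<in>T0 U. \<forall>A B. dh F (dJ (Scurv F \<sigma>)) A B p = 0))
       \<and> ((\<forall>p\<in>T0 U. \<forall>i. chi F \<sigma> i p = 0) \<longleftrightarrow>
            (\<forall>p\<in>T0 U. \<forall>A B. dform1 (alpha F \<sigma>) A B p =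
               2 * (\<Sum>i\<in>UNIV. \<Sum>j\<in>UNIV. meanB F i j p * wedge (deltay_form F i) (dx_form j) A B p)))"
proof -
  interpret finsler_chart U F \<sigma> using fins sig_smooth sig_nz by unfold_locales
  show ?thesis
    unfolding lie1_alpha_zero_iff dh_dJ_Scurv_zero_iff dform1_alpha_eq_iff chi_zero_iff_hor_deriv_symmetric
    by simp
qed

end
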